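(* Under the assumptions and notation of the EM recursion (regular conditional distributions $P_{Y|X}$, $P_{X|Y}$ exist; $h>0$ a $P_X$-density of a probability measure $Q^\ast_X$; $g_0>0$ a $P_Y$-density; $q^{(n)}_{Y|X=x}(y)=g_n(y)/\int g_n(z)P_{Y|X=x}(dz)$ and $g_{n+1}(y)=\int q^{(n)}_{Y|X=x}(y)h(x)P_{X|Y=y}(dx)$; $h_n=E_P[g_n(Y)\mid X=\cdot]$; with all integrals in the Kullback–Leibler comparison finite), suppose in addition that $\lim_n g_n(y)=g(y)>0$ exists for $P_Y$-a.e. $y$, that $\lim_n q^{(n)}_{Y|X=x}(y)=q_{Y|X=x}(y)>0$ exists for $P$-a.e. $(x,y)$, that $\int g\,dP_Y=1$, and that $$\lim_n\int g_n(z)P_{Y|X=x}(dz)=\int g(z)P_{Y|X=x}(dz)\ \ P_X\text{-a.s.},\qquad \lim_n\int q^{(n)}_{Y|X=x}(y)h(x)P_{X|Y=y}(dx)=\int q_{Y|X=x}(y)h(x)P_{X|Y=y}(dx)\ \ P_Y\text{-a.s.}$$ Then: (i) $g$ is a density w.r.t. $P_Y$; the distribution $\widehat Q$ with $\frac{d\widehat Q}{dP}=g(Y)$ is related to $P$ through label shift with $\frac{d\widehat Q_Y}{dP_Y}=g$, and with $\widehat h(x)=E_P[g(Y)\mid X=x]$ one has $\mathrm{KL}_{P_X}(h\|\widehat h)\le\inf_n\mathrm{KL}_{P_X}(h\|h_n)$. (ii) $g$ solves $1=\int\frac{h(x)}{\int g(z)P_{Y|X=x}(dz)}P_{X|Y=y}(dx)$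 for $P_Y$-a.e. $y$. Defining $f(x,y)=\frac{g(y)\,h(x)}{\int g(z)P_{Y|X=x}(dz)}$ ($P$-a.s.), $f$ is a density w.r.t. $P$, the distribution $Q$ with $\frac{dQ}{dP}=f$ is related to $P$ through FJS, $Q_X=Q_X^\ast$, and $\frac{dQ_Y}{dP_Y}=g$.
   Context: Setting: $(\Omega_X,\mathcal H)$ and $(\Omega_Y,\mathcal G)$ are measurable spaces, $\Omega=\Omega_X\times\Omega_Y$, $\mathcal F=\mathcal H\otimes\mathcal G$, and $X,Y$ are the coordinate projections. $P$ is a probability measure on $(\Omega,\mathcal F)$ with marginals $P_X,P_Y$. Regular conditional distributions $P_{Y|X}$, $P_{X|Y}$: maps $(x,G)\mapsto P_{Y|X=x}[G]$ measurable in $x$, probability measures in $G$, with $P[Y\in G\mid X=x]=P_{Y|X=x}[G]$ $P_X$-a.s. for every $G$ (and analogously). Label shift between $P$ and $\widehat Q$: $P[X\in H\mid Y=\cdot]=\widehat Q[X\in H\mid Y=\cdot]$ a.s. for all $H$. FJS between $P$ and $Q$: $\frac{dQ}{dP}=\hbar(X)\overline g(Y)$ for measurable $\hbar,\overline g\ge0$. $\mathrm{KL}_\mu(\lambda_0\|\lambda_1)=\int\lambda_0\log(\lambda_0/\lambda_1)\,d\mu$ for probability densities $\lambda_0,\lambda_1$ w.r.t. $\mu$ that are $\mu$-a.s. positive and with $\int\lambda_0|\log(\lambda_0/\lambda_1)|d\mu<\infty$. *)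

theory Defs
  imports "HOL-Probability.Probability"
begin

text \<open>sigma-algebras generated by the coordinate projections X = fst, Y = snd on Omega\<close>
definition sigX :: "('a \<times> 'b) measure \<Rightarrow> 'a measure \<Rightarrow> ('a \<times> 'b) measure" where
  "sigX P MX = vimage_algebra (space P) fst MX"

definition sigY :: "('a \<times> 'b) measure \<Rightarrow> 'b measure \<Rightarrow> ('a \<times> 'b) measure" where
  "sigY P MY = vimage_algebra (space P) snd MY"

text \<open>K is a regular conditional distribution of Y given X under P:
  x \<mapsto> K x G measurable, K x a probability measure on MY, and
  P[Y \<in> G | X = x] = K x G for P_X-a.e. x (conditional probability = conditional
  expectation of the indicator given sigma(X)).\<close>
definition reg_cond_YX :: "'a measure \<Rightarrow> 'b measure \<Rightarrow> ('a \<times> 'b) measure \<Rightarrow> ('a \<Rightarrow> 'b measure) \<Rightarrow> bool" where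
  "reg_cond_YX MX MY P K \<longleftrightarrow>
     (\<forall>x\<in>space MX. prob_space (K x) \<and> sets (K x) = sets MY) \<and>
     (\<forall>G\<in>sets MY. (\<lambda>x. measure (K x) G) \<in> borel_measurable MX) \<and>
     (\<forall>G\<in>sets MY. AE \<omega> in P.
        real_cond_exp P (sigX P MX) (indicator (space MX \<times> G)) \<omega> = measure (K (fst \<omega>)) G)"

definition reg_cond_XY :: "'a measure \<Rightarrow> 'b measure \<Rightarrow> ('a \<times> 'b) measure \<Rightarrow> ('b \<Rightarrow> 'a measure) \<Rightarrow> bool" where
  "reg_cond_XY MX MY P K \<longleftrightarrow>
     (\<forall>y\<in>space MY. prob_space (K y) \<and> sets (K y) = sets MX) \<and>
     (\<forall>H\<in>sets MX. (\<lambda>y. measure (K y) H) \<in> borel_measurable MY) \<and>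
     (\<forall>H\<in>sets MX. AE \<omega> in P.
        real_cond_exp P (sigY P MY) (indicator (H \<times> space MY)) \<omega> = measure (K (snd \<omega>)) H)"

definition prob_density :: "'a measure \<Rightarrow> ('a \<Rightarrow> real) \<Rightarrow> bool" where
  "prob_density M f \<longleftrightarrow> f \<in> borel_measurable M \<and> (AE x in M. 0 \<le> f x) \<and>
     integrable M f \<and> (\<integral>x. f x \<partial>M) = 1"

definition label_shift :: "'a measure \<Rightarrow> 'b measure \<Rightarrow> ('a \<times> 'b) measure \<Rightarrow> ('a \<times> 'b) measure \<Rightarrow> bool" where
  "label_shift MX MY P Q \<longleftrightarrow>
     (\<forall>H\<in>sets MX. AE \<omega> in P.
        real_cond_exp P (sigY P MY) (indicator (H \<times> space MY)) \<omega> =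
        real_cond_exp Q (sigY Q MY) (indicator (H \<times> space MY)) \<omega>)"

definition FJS :: "'a measure \<Rightarrow> 'b measure \<Rightarrow> ('a \<times> 'b) measure \<Rightarrow> ('a \<times> 'b) measure \<Rightarrow> bool" where
  "FJS MX MY P Q \<longleftrightarrow>
     (\<exists>hb gb. hb \<in> borel_measurable MX \<and> gb \<in> borel_measurable MY \<and>
        (\<forall>x\<in>space MX. 0 \<le> hb x) \<and> (\<forall>y\<in>space MY. 0 \<le> gb y) \<and>
        Q = density P (\<lambda>\<omega>. ennreal (hb (fst \<omega>) * gb (snd \<omega>))))"

definition KL :: "'a measure \<Rightarrow> ('a \<Rightarrow> real) \<Rightarrow> ('a \<Rightarrow> real) \<Rightarrow> real" where
  "KL \<mu> l0 l1 = (\<integral>x. l0 x * ln (l0 x / l1 x) \<partial>\<mu>)"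

definition KL_wd :: "'a measure \<Rightarrow> ('a \<Rightarrow> real) \<Rightarrow> ('a \<Rightarrow> real) \<Rightarrow> bool" where
  "KL_wd \<mu> l0 l1 \<longleftrightarrow> prob_density \<mu> l0 \<and> prob_density \<mu> l1 \<and>
     (AE x in \<mu>. 0 < l0 x \<and> 0 < l1 x) \<and>
     integrable \<mu> (\<lambda>x. l0 x * \<bar>ln (l0 x / l1 x)\<bar>)"

definition EM_q :: "('a \<Rightarrow> 'b measure) \<Rightarrow> (nat \<Rightarrow> 'b \<Rightarrow> real) \<Rightarrow> nat \<Rightarrow> 'a \<Rightarrow> 'b \<Rightarrow> real" where
  "EM_q KYX gs n x y = gs n y / (\<integral>z. gs n z \<partial>KYX x)"

end

theory Submission
  imports Defs
begin

text \<open>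
  Disintegrating P along the regular conditional distributions gives, for every positive
  P_Y-density G, the joint law Q_G with dQ_G/dP = h(x) G(y) / E[G(Y) | X = x]: its X-marginal is
  h P_X and its Y-marginal has density G(y) s_G(y), where s_G(y) = \<integral> h(x) / E[G(Y) | X = x]
  P_{X|Y=y}(dx). The EM recursion reads g_{n+1} = g_n s_{g_n}, so every g_n is a positive
  probability density and Q_n = Q_{g_n} has Y-marginal g_{n+1} P_Y.
  Writing h_n = E[g_n(Y) | X], the elementary bound ln(ab) \<ge> 2 - 1/a - 1/b with a = g_{n+1}/g_n
  and b = (h_{n+1}/h_n)/a, integrated against Q_n, shows that KL(h \<parallel> h_n) decreases;
  Fatou's lemma, applied to the nonnegative integrands h ln(h/h_n) - h + h_n, passes this to the
  limit. Passing to the limit in the definitions of g_{n+1} and q^{(n)} gives s_g = 1, so Q_g has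
  Y-marginal g P_Y and a density of product form. Finally, density P g(Y) changes P only through a
  \<sigma>(Y)-measurable factor, which leaves the conditional law of X given Y unchanged.
\<close>

lemma kernel_measurable_subprob_algebra:
  assumes "\<And>x. x \<in> space M \<Longrightarrow> prob_space (K x)" "\<And>x. x \<in> space M \<Longrightarrow> sets (K x) = sets N"
    and "\<And>A. A \<in> sets N \<Longrightarrow> (\<lambda>x. measure (K x) A) \<in> borel_measurable M"
  shows "K \<in> M \<rightarrow>\<^sub>M subprob_algebra N"
proof (rule measurable_subprob_algebra)
  fix A assume "A \<in> sets N"
  then have "(\<lambda>x. ennreal (measure (K x) A)) \<in> borel_measurable M"
    using assms(3) by measurable
  then show "(\<lambda>x. emeasure (K x) A) \<in> borel_measurable M"
    by (rule measurable_cong[THEN iffD1, rotated])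
       (simp add: assms(1) finite_measure.emeasure_eq_measure prob_space.axioms(1))
qed (use assms in \<open>auto intro: prob_space_imp_subprob_space\<close>)

lemma sigma_finite_subalgebra_vimage_algebra:
  assumes "finite_measure M" "f \<in> M \<rightarrow>\<^sub>M N"
  shows "sigma_finite_subalgebra M (vimage_algebra (space M) f N)"
proof (intro finite_measure_subalgebra_is_sigma_finite finite_measure_subalgebra.intro assms(1))
  show "finite_measure_subalgebra_axioms M (vimage_algebra (space M) f N)"
    using assms(2) unfolding finite_measure_subalgebra_axioms_def subalgebra_def
    by (subst sets_vimage_algebra2) (auto simp: measurable_def)
qed

lemma (in sigma_finite_subalgebra) real_cond_exp_density:
  assumes \<rho>[measurable]: "\<rho> \<in> borel_measurable F" and \<rho>_nonneg: "AE \<omega> in M. 0 \<le> \<rho> \<omega>"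
    and \<rho>_int: "integrable M \<rho>"
    and Z[measurable]: "Z \<in> borel_measurable M" and \<rho>Z_int: "integrable M (\<lambda>\<omega>. \<rho> \<omega> * Z \<omega>)"
  shows "AE \<omega> in density M \<rho>. real_cond_exp (density M \<rho>) F Z \<omega> = real_cond_exp M F Z \<omega>"
proof -
  let ?Q = "density M \<rho>"
  have [measurable]: "\<rho> \<in> borel_measurable M"
    by (rule measurable_from_subalg[OF subalg \<rho>])
  have "emeasure ?Q (space ?Q) \<noteq> \<infinity>"
    using integrableD(2)[OF \<rho>_int] by (simp add: emeasure_density)
  then have "finite_measure ?Q"
    by (rule finite_measureI)
  then interpret Q: sigma_finite_subalgebra ?Q F
    using subalg
    by (intro finite_measure_subalgebra_is_sigma_finite finite_measure_subalgebra.intro)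
       (auto simp: finite_measure_subalgebra_axioms_def subalgebra_def)
  show ?thesis
  proof (rule Q.real_cond_exp_charact)
    show "integrable ?Q Z"
      using \<rho>Z_int \<rho>_nonneg by (simp add: integrable_density)
    show "integrable ?Q (real_cond_exp M F Z)"
      using real_cond_exp_intg(1)[OF \<rho>Z_int] \<rho>_nonneg by (simp add: integrable_density)
  next
    fix A assume [measurable]: "A \<in> sets F"
    then have [measurable]: "A \<in> sets M"
      using subalg by (auto simp: subalgebra_def)
    have int: "integrable M (\<lambda>\<omega>. (indicator A \<omega> * \<rho> \<omega>) * Z \<omega>)"
      using integrable_mult_indicator[OF _ \<rho>Z_int, of A] by (simp add: mult.assoc)
    have "(\<integral>\<omega>\<in>A. Z \<omega> \<partial>?Q) = (\<integral>\<omega>. (indicator A \<omega> * \<rho> \<omega>) * Z \<omega> \<partial>M)"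
      using \<rho>_nonneg by (simp add: set_lebesgue_integral_def integral_density ac_simps)
    also have "\<dots> = (\<integral>\<omega>. (indicator A \<omega> * \<rho> \<omega>) * real_cond_exp M F Z \<omega> \<partial>M)"
      by (rule real_cond_exp_intg(2)[OF int, symmetric]) measurable
    also have "\<dots> = (\<integral>\<omega>\<in>A. real_cond_exp M F Z \<omega> \<partial>?Q)"
      using \<rho>_nonneg by (simp add: set_lebesgue_integral_def integral_density ac_simps)
    finally show "(\<integral>\<omega>\<in>A. Z \<omega> \<partial>?Q) = (\<integral>\<omega>\<in>A. real_cond_exp M F Z \<omega> \<partial>?Q)" .
  qed simp
qed

lemma prob_density_nn_integral:
  assumes "prob_density M f"
  shows "(\<integral>\<^sup>+x. ennreal (f x) \<partial>M) = 1"
  using assms by (simp add: prob_density_def nn_integral_eq_integral)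

lemma prob_densityI_nn_integral:
  assumes "f \<in> borel_measurable M" "AE x in M. 0 \<le> f x" "(\<integral>\<^sup>+x. ennreal (f x) \<partial>M) = 1"
  shows "prob_density M f"
  using assms nn_integral_eq_integrable[OF assms(1,2), of 1] by (simp add: prob_density_def)

lemma prob_densityI_integral:
  fixes f :: "'a \<Rightarrow> real"
  assumes "(\<integral>x. f x \<partial>M) = 1" "AE x in M. 0 \<le> f x"
  shows "prob_density M f"
proof -
  have "integrable M f"
    using assms(1) not_integrable_integral_eq by force
  then show ?thesis
    using assms by (simp add: prob_density_def borel_measurable_integrable)
qed

lemma prob_space_density_iff:
  assumes "f \<in> borel_measurable M"
  shows "prob_space (density M f) \<longleftrightarrow> (\<integral>\<^sup>+x. f x \<partial>M) = 1"
proof -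
  have "emeasure (density M f) (space (density M f)) = (\<integral>\<^sup>+x. f x \<partial>M)"
    using assms by (auto simp: emeasure_density intro!: nn_integral_cong)
  then show ?thesis
    by (metis prob_space.emeasure_space_1 prob_spaceI)
qed

lemma (in prob_space) integrable_pos_of_nn_integral_finite:
  fixes f :: "'a \<Rightarrow> real"
  assumes f[measurable]: "f \<in> borel_measurable M" and pos: "AE x in M. 0 < f x"
    and fin: "(\<integral>\<^sup>+x. ennreal (f x) \<partial>M) \<noteq> \<infinity>"
  shows "integrable M f" and "(\<integral>\<^sup>+x. ennreal (f x) \<partial>M) = ennreal (integral\<^sup>L M f)"
    and "0 < integral\<^sup>L M f"
proof -
  have nonneg: "AE x in M. 0 \<le> f x"
    using pos by eventually_elim simp
  show int: "integrable M f"
    using fin nonneg by (intro integrableI_nonneg) (auto simp: less_top)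
  show "(\<integral>\<^sup>+x. ennreal (f x) \<partial>M) = ennreal (integral\<^sup>L M f)"
    by (rule nn_integral_eq_integral[OF int nonneg])
  have "integral\<^sup>L M f \<noteq> 0"
  proof
    assume "integral\<^sup>L M f = 0"
    then have "AE x in M. f x = 0"
      using integral_nonneg_eq_0_iff_AE[OF int nonneg] by simp
    with pos have "AE x in M. False"
      by eventually_elim simp
    then show False
      by simp
  qed
  then show "0 < integral\<^sup>L M f"
    using integral_nonneg_AE[OF nonneg] by simp
qed

lemma integrable_integral_density_ratio:
  fixes f g :: "'a \<Rightarrow> real"
  assumes [measurable]: "f \<in> borel_measurable M" "g \<in> borel_measurable M"
    and f_pos: "AE x in M. 0 < f x" and g_int: "integrable M g"
  shows "integrable (density M (\<lambda>x. ennreal (f x))) (\<lambda>x. g x / f x)"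
    and "(\<integral>x. g x / f x \<partial>density M (\<lambda>x. ennreal (f x))) = (\<integral>x. g x \<partial>M)"
proof -
  have f_nonneg: "AE x in M. 0 \<le> f x" and eq: "AE x in M. f x * (g x / f x) = g x"
    using f_pos by (auto elim: AE_mp)
  show "integrable (density M (\<lambda>x. ennreal (f x))) (\<lambda>x. g x / f x)"
    using integrable_cong_AE[OF _ _ eq] g_int f_nonneg by (simp add: integrable_density)
  show "(\<integral>x. g x / f x \<partial>density M (\<lambda>x. ennreal (f x))) = (\<integral>x. g x \<partial>M)"
    using integral_cong_AE[OF _ _ eq] f_nonneg by (simp add: integral_density)
qed

lemma integral_le_of_AE_tendsto_nonneg:
  fixes f :: "nat \<Rightarrow> 'a \<Rightarrow> real"
  assumes [measurable]: "\<And>m. f m \<in> borel_measurable M" "F \<in> borel_measurable M"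
    and nonneg: "\<And>m. AE x in M. 0 \<le> f m x" and int: "\<And>m. integrable M (f m)"
    and lim: "AE x in M. (\<lambda>m. f m x) \<longlonglongrightarrow> F x"
    and bound: "eventually (\<lambda>m. integral\<^sup>L M (f m) \<le> B) sequentially"
  shows "integral\<^sup>L M F \<le> B"
proof -
  have F_nonneg: "AE x in M. 0 \<le> F x"
  proof -
    have "AE x in M. \<forall>m. 0 \<le> f m x"
      using nonneg by (simp add: AE_all_countable)
    with lim show ?thesis
      by eventually_elim (auto intro: LIMSEQ_le_const)
  qed
  have B_nonneg: "0 \<le> B"
    using bound integral_nonneg_AE[OF nonneg] by (auto simp: eventually_sequentially intro: order_trans)
  have "(\<integral>\<^sup>+x. ennreal (F x) \<partial>M) = (\<integral>\<^sup>+x. liminf (\<lambda>m. ennreal (f m x)) \<partial>M)"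
    using lim by (intro nn_integral_cong_AE) (auto elim!: AE_mp intro!: lim_imp_Liminf[symmetric])
  also have "\<dots> \<le> liminf (\<lambda>m. \<integral>\<^sup>+x. ennreal (f m x) \<partial>M)"
    by (rule nn_integral_liminf) simp
  also have "\<dots> = liminf (\<lambda>m. ennreal (integral\<^sup>L M (f m)))"
    using nonneg int by (simp add: nn_integral_eq_integral)
  also have "\<dots> \<le> ennreal B"
    using bound by (intro Liminf_le) (auto elim!: eventually_mono intro: ennreal_leI)
  finally show ?thesis
    using F_nonneg B_nonneg by (simp add: integral_eq_nn_integral enn2real_leI)
qed

lemma KL_cong_AE:
  assumes "l0 \<in> borel_measurable M" "l1 \<in> borel_measurable M" "l1' \<in> borel_measurable M"
    and "AE x in M. l1 x = l1' x"
  shows "KL M l0 l1 = KL M l0 l1'"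
  unfolding KL_def using assms by (intro integral_cong_AE) (auto elim: AE_mp)

lemma one_sub_inverse_le_ln: "0 < a \<Longrightarrow> 1 - 1 / a \<le> ln (a :: real)"
  using ln_le_minus_one[of "1 / a"] by (simp add: ln_div)

lemma two_sub_inverses_le_ln_mult:
  "0 < a \<Longrightarrow> 0 < b \<Longrightarrow> 2 - 1 / a - 1 / b \<le> ln (a * b :: real)"
  using one_sub_inverse_le_ln[of a] one_sub_inverse_le_ln[of b] by (simp add: ln_mult)

lemma mult_ln_div_ge_diff:
  fixes s t :: real
  assumes "0 < t" "0 < s"
  shows "t - s \<le> t * ln (t / s)"
proof -
  have "t * (1 - s / t) \<le> t * ln (t / s)"
    using one_sub_inverse_le_ln[of "t / s"] assms by (intro mult_left_mono) simp_all
  then show ?thesis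
    using assms by (simp add: right_diff_distrib)
qed

section \<open>Disintegration along regular conditional distributions\<close>

lemma nn_integral_indicator_emeasure_kernel:
  assumes M: "prob_space M" and K_prob: "\<And>x. x \<in> space M \<Longrightarrow> prob_space (K x)"
    and [measurable]: "(\<lambda>x. measure (K x) G) \<in> borel_measurable M" "A \<in> sets M"
  shows "(\<integral>\<^sup>+x. indicator A x * emeasure (K x) G \<partial>M) = ennreal (\<integral>x. indicator A x * measure (K x) G \<partial>M)"
proof -
  interpret prob_space M by fact
  have bounded: "0 \<le> indicator A x * measure (K x) G \<and> indicator A x * measure (K x) G \<le> 1"
    if "x \<in> space M" for x
    using prob_space.prob_le_1[OF K_prob[OF that]] by (auto split: split_indicator)
  have "(\<integral>\<^sup>+x. indicator A x * emeasure (K x) G \<partial>M) = (\<integral>\<^sup>+x. ennreal (indicator A x * measure (K x) G) \<partial>M)"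
    using K_prob by (intro nn_integral_cong)
       (auto simp: finite_measure.emeasure_eq_measure prob_space.axioms(1) split: split_indicator)
  also have "\<dots> = ennreal (\<integral>x. indicator A x * measure (K x) G \<partial>M)"
    using bounded
    by (intro nn_integral_eq_integral integrable_const_bound[where B=1]) auto
  finally show ?thesis .
qed

lemma emeasure_Int_vimage_eq_cond_kernel:
  assumes P: "prob_space P" and \<pi>[measurable]: "\<pi> \<in> P \<rightarrow>\<^sub>M M1" and \<sigma>[measurable]: "\<sigma> \<in> P \<rightarrow>\<^sub>M M2"
    and K_prob: "\<And>x. x \<in> space M1 \<Longrightarrow> prob_space (K x)"
    and K_meas: "(\<lambda>x. measure (K x) G) \<in> borel_measurable M1"
    and K_cond: "AE \<omega> in P. real_cond_exp P (vimage_algebra (space P) \<pi> M1) (indicator (\<sigma> -` G \<inter> space P)) \<omega>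
                   = measure (K (\<pi> \<omega>)) G"
    and A[measurable]: "A \<in> sets M1" and G[measurable]: "G \<in> sets M2"
  shows "emeasure P (\<pi> -` A \<inter> \<sigma> -` G \<inter> space P) = (\<integral>\<^sup>+x. indicator A x * emeasure (K x) G \<partial>distr P M1 \<pi>)"
proof -
  interpret prob_space P by fact
  let ?F = "vimage_algebra (space P) \<pi> M1"
  interpret sigma_finite_subalgebra P ?F
    by (rule sigma_finite_subalgebra_vimage_algebra) (auto intro: finite_measure_axioms)
  have "\<pi> \<in> ?F \<rightarrow>\<^sub>M M1"
    using measurable_space[OF \<pi>] by (intro measurable_vimage_algebra1) auto
  then have [measurable]: "(\<lambda>\<omega>. indicator A (\<pi> \<omega>) :: real) \<in> borel_measurable ?F"
    by measurable
  note K_meas[measurable]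
  have "measure P (\<pi> -` A \<inter> \<sigma> -` G \<inter> space P) = (\<integral>\<omega>. indicator A (\<pi> \<omega>) * indicator (\<sigma> -` G \<inter> space P) \<omega> \<partial>P)"
    by (simp add: indicator_inter_arith[symmetric] Int_assoc Int_commute[of "\<sigma> -` G"]
                  indicator_vimage[symmetric] Int_absorb2 measurable_sets)
  also have "\<dots> = (\<integral>\<omega>. indicator A (\<pi> \<omega>) * real_cond_exp P ?F (indicator (\<sigma> -` G \<inter> space P)) \<omega> \<partial>P)"
    by (rule real_cond_exp_intg(2)[symmetric])
       (auto intro!: integrable_const_bound[where B=1] split: split_indicator)
  also have "\<dots> = (\<integral>\<omega>. indicator A (\<pi> \<omega>) * measure (K (\<pi> \<omega>)) G \<partial>P)"
    using K_cond by (intro integral_cong_AE) (auto intro: measurable_from_subalg[OF subalg])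
  also have "\<dots> = (\<integral>x. indicator A x * measure (K x) G \<partial>distr P M1 \<pi>)"
    by (rule integral_distr[symmetric]) measurable
  moreover have "(\<integral>\<^sup>+x. indicator A x * emeasure (K x) G \<partial>distr P M1 \<pi>)
      = ennreal (\<integral>x. indicator A x * measure (K x) G \<partial>distr P M1 \<pi>)"
    by (intro nn_integral_indicator_emeasure_kernel prob_space_distr; (simp add: K_prob)?; measurable)
  ultimately show ?thesis
    by (simp add: emeasure_eq_measure)
qed

locale kernel_disintegration =
  fixes M1 :: "'a measure" and M2 :: "'b measure" and P :: "('a \<times> 'b) measure"
    and K :: "'a \<Rightarrow> 'b measure"
  assumes prob_space_P: "prob_space P" and sets_P[measurable_cong]: "sets P = sets (M1 \<Otimes>\<^sub>M M2)"
    and kernel[measurable]: "K \<in> M1 \<rightarrow>\<^sub>M subprob_algebra M2"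
    and emeasure_Times: "\<And>A B. A \<in> sets M1 \<Longrightarrow> B \<in> sets M2 \<Longrightarrow>
      emeasure P (A \<times> B) = (\<integral>\<^sup>+x. indicator A x * emeasure (K x) B \<partial>distr P M1 fst)"
begin

lemma space_P: "space P = space M1 \<times> space M2"
  using sets_eq_imp_space_eq[OF sets_P] by (simp add: space_pair_measure)

lemma space_K: "x \<in> space M1 \<Longrightarrow> space (K x) = space M2"
  using kernel by (rule subprob_measurableD(1))

lemma Pair_measurable: "x \<in> space M1 \<Longrightarrow> Pair x \<in> K x \<rightarrow>\<^sub>M M1 \<Otimes>\<^sub>M M2"
  by (simp add: measurable_cong_sets[OF subprob_measurableD(2)[OF kernel] refl])

lemma Pair_kernel_measurable:
  "(\<lambda>x. distr (K x) (M1 \<Otimes>\<^sub>M M2) (Pair x)) \<in> distr P M1 fst \<rightarrow>\<^sub>M subprob_algebra (M1 \<Otimes>\<^sub>M M2)"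
  by (subst measurable_cong_sets[OF sets_distr refl]) (rule measurable_distr2[OF _ kernel], simp)

abbreviation bind_kernel :: "('a \<times> 'b) measure" where
  "bind_kernel \<equiv> distr P M1 fst \<bind> (\<lambda>x. distr (K x) (M1 \<Otimes>\<^sub>M M2) (Pair x))"

lemma space_distr_fst_nonempty: "space (distr P M1 fst) \<noteq> {}"
  using prob_space.not_empty[OF prob_space_P] by (simp add: space_P)

lemma emeasure_bind_kernel_Times:
  assumes A: "A \<in> sets M1" and B: "B \<in> sets M2"
  shows "emeasure bind_kernel (A \<times> B) = emeasure P (A \<times> B)"
proof -
  have "emeasure (distr (K x) (M1 \<Otimes>\<^sub>M M2) (Pair x)) (A \<times> B) = indicator A x * emeasure (K x) B"
    if "x \<in> space M1" for x
  proof -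
    have "Pair x -` (A \<times> B) \<inter> space (K x) = (if x \<in> A then B else {})"
      using space_K[OF that] sets.sets_into_space[OF B] by auto
    then show ?thesis
      using A B by (simp add: emeasure_distr[OF Pair_measurable[OF that]] split: split_indicator)
  qed
  then show ?thesis
    using A B emeasure_Times[OF A B]
    by (subst emeasure_bind[OF space_distr_fst_nonempty Pair_kernel_measurable])
       (auto intro!: nn_integral_cong)
qed

lemma P_eq_bind_kernel: "P = bind_kernel"
proof (rule measure_eqI_generator_eq[OF Int_stable_pair_measure_generator[of M1 M2],
      where \<Omega>="space M1 \<times> space M2" and A="\<lambda>_. space M1 \<times> space M2"])
  show "{a \<times> b |a b. a \<in> sets M1 \<and> b \<in> sets M2} \<subseteq> Pow (space M1 \<times> space M2)"
    by (auto dest: sets.sets_into_space)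
  show "sets P = sigma_sets (space M1 \<times> space M2) {a \<times> b |a b. a \<in> sets M1 \<and> b \<in> sets M2}"
    using sets_P by (simp add: sets_pair_measure)
  show "sets bind_kernel = sigma_sets (space M1 \<times> space M2) {a \<times> b |a b. a \<in> sets M1 \<and> b \<in> sets M2}"
    using space_distr_fst_nonempty by (subst sets_bind[where N="M1 \<Otimes>\<^sub>M M2"]) (auto simp: sets_pair_measure)
  show "emeasure P (space M1 \<times> space M2) \<noteq> \<infinity>"
    using prob_space.emeasure_space_1[OF prob_space_P] by (simp add: space_P)
  show "X \<in> {a \<times> b |a b. a \<in> sets M1 \<and> b \<in> sets M2} \<Longrightarrow> emeasure P X = emeasure bind_kernel X" for X
    using emeasure_bind_kernel_Times by auto
qed auto

lemma nn_integral_disintegration: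
  assumes "f \<in> borel_measurable (M1 \<Otimes>\<^sub>M M2)"
  shows "(\<integral>\<^sup>+\<omega>. f \<omega> \<partial>P) = (\<integral>\<^sup>+x. \<integral>\<^sup>+y. f (x, y) \<partial>K x \<partial>distr P M1 fst)"
  using assms
  by (subst P_eq_bind_kernel, subst nn_integral_bind[OF _ Pair_kernel_measurable])
     (auto intro!: nn_integral_cong simp: nn_integral_distr[OF Pair_measurable])

lemma AE_disintegration:
  assumes "AE \<omega> in P. Q \<omega>"
  shows "AE x in distr P M1 fst. AE y in K x. Q (x, y)"
proof -
  obtain N where N: "{\<omega> \<in> space P. \<not> Q \<omega>} \<subseteq> N" "emeasure P N = 0" "N \<in> sets P"
    using AE_E[OF assms] .
  then have null: "N \<in> null_sets P" by (simp add: null_sets_def)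
  from N(3) have [measurable]: "N \<in> sets (M1 \<Otimes>\<^sub>M M2)"
    using sets_P by auto
  have "AE \<omega> in bind_kernel. \<omega> \<notin> N"
    by (subst P_eq_bind_kernel[symmetric]) (rule AE_not_in[OF null])
  then have "AE x in distr P M1 fst. AE \<omega> in distr (K x) (M1 \<Otimes>\<^sub>M M2) (Pair x). \<omega> \<notin> N"
    by (subst (asm) AE_bind[OF Pair_kernel_measurable]) auto
  moreover have "AE x in distr P M1 fst. x \<in> space M1"
    by (rule AE_I2) simp
  ultimately show ?thesis
  proof eventually_elim
    case (elim x)
    then have "AE y in K x. (x, y) \<notin> N"
      by (subst (asm) AE_distr_iff[OF Pair_measurable]) auto
    moreover have "AE y in K x. y \<in> space M2"
      using elim AE_space[of "K x"] by (simp add: space_K)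
    ultimately show ?case
      by eventually_elim (use N(1) elim in \<open>auto simp: space_P\<close>)
  qed
qed

end

locale joint_distribution =
  fixes MX :: "'a measure" and MY :: "'b measure" and P :: "('a \<times> 'b) measure"
  assumes prob_space_P: "prob_space P" and sets_P[measurable_cong]: "sets P = sets (MX \<Otimes>\<^sub>M MY)"
begin

abbreviation PX :: "'a measure" where "PX \<equiv> distr P MX fst"
abbreviation PY :: "'b measure" where "PY \<equiv> distr P MY snd"

lemma space_P: "space P = space MX \<times> space MY"
  using sets_eq_imp_space_eq[OF sets_P] by (simp add: space_pair_measure)

lemma prob_density_PYD:
  assumes "prob_density PY G"
  shows "G \<in> borel_measurable MY" and "integrable PY G"
  using assms by (simp_all add: prob_density_def measurable_cong_sets[OF sets_distr refl])

lemma sigma_finite_subalgebra_sigX: "sigma_finite_subalgebra P (sigX P MX)"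
  and sigma_finite_subalgebra_sigY: "sigma_finite_subalgebra P (sigY P MY)"
  unfolding sigX_def sigY_def using prob_space_P
  by (auto intro!: sigma_finite_subalgebra_vimage_algebra simp: prob_space_def)

lemma measurable_snd_sigY: "G \<in> borel_measurable MY \<Longrightarrow> (\<lambda>\<omega>. G (snd \<omega>)) \<in> borel_measurable (sigY P MY)"
  unfolding sigY_def
  by (rule measurable_compose[OF measurable_vimage_algebra1]) (auto simp: space_P)

lemma measurable_fst_sigX: "G \<in> borel_measurable MX \<Longrightarrow> (\<lambda>\<omega>. G (fst \<omega>)) \<in> borel_measurable (sigX P MX)"
  unfolding sigX_def
  by (rule measurable_compose[OF measurable_vimage_algebra1]) (auto simp: space_P)

lemma label_shift_density_snd:
  assumes G: "prob_density PY G" and G_pos: "AE y in PY. 0 < G y"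
  shows "label_shift MX MY P (density P (\<lambda>\<omega>. ennreal (G (snd \<omega>))))"
  unfolding label_shift_def
proof
  fix H assume [measurable]: "H \<in> sets MX"
  interpret sigma_finite_subalgebra P "sigY P MY"
    by (rule sigma_finite_subalgebra_sigY)
  note [measurable] = prob_density_PYD(1)[OF G]
  have int: "integrable P (\<lambda>\<omega>. G (snd \<omega>))"
    using G by (simp add: prob_density_def integrable_distr_eq)
  have "AE \<omega> in density P (\<lambda>\<omega>. ennreal (G (snd \<omega>))).
      real_cond_exp (density P (\<lambda>\<omega>. ennreal (G (snd \<omega>)))) (sigY P MY) (indicator (H \<times> space MY)) \<omega>
      = real_cond_exp P (sigY P MY) (indicator (H \<times> space MY)) \<omega>"
  proof (rule real_cond_exp_density)
    show "AE \<omega> in P. 0 \<le> G (snd \<omega>)"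
      using G by (simp add: prob_density_def AE_distr_iff)
    show "integrable P (\<lambda>\<omega>. G (snd \<omega>) * indicator (H \<times> space MY) \<omega>)"
      by (intro integrable_real_mult_indicator int) measurable
  qed (auto intro: measurable_snd_sigY int)
  moreover have "AE \<omega> in P. 0 < G (snd \<omega>)"
    using G_pos by (rule AE_distrD[rotated]) measurable
  moreover have "sigY (density P (\<lambda>\<omega>. ennreal (G (snd \<omega>)))) MY = sigY P MY"
    by (simp add: sigY_def)
  ultimately show "AE \<omega> in P. real_cond_exp P (sigY P MY) (indicator (H \<times> space MY)) \<omega> =
      real_cond_exp (density P (\<lambda>\<omega>. ennreal (G (snd \<omega>)))) (sigY (density P (\<lambda>\<omega>. ennreal (G (snd \<omega>)))) MY)
        (indicator (H \<times> space MY)) \<omega>"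
    by (subst (asm) AE_density) (auto elim: AE_mp)
qed

lemma distr_snd_density_snd:
  fixes G :: "'b \<Rightarrow> real"
  assumes "G \<in> borel_measurable MY"
  shows "distr (density P (\<lambda>\<omega>. ennreal (G (snd \<omega>)))) MY snd = density PY G"
  using assms by (intro density_distr[symmetric]) auto

lemma prob_space_density_snd:
  assumes "prob_density PY G"
  shows "prob_space (density P (\<lambda>\<omega>. ennreal (G (snd \<omega>))))"
proof (rule prob_space_distrD)
  note [measurable] = prob_density_PYD(1)[OF assms]
  show "prob_space (distr (density P (\<lambda>\<omega>. ennreal (G (snd \<omega>)))) MY snd)"
    using prob_density_nn_integral[OF assms]
    by (simp add: distr_snd_density_snd prob_space_density_iff)
qed measurable

end

locale cond_kernels = joint_distribution +
  fixes KYX :: "'a \<Rightarrow> 'b measure" and KXY :: "'b \<Rightarrow> 'a measure"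
  assumes KYX: "reg_cond_YX MX MY P KYX" and KXY: "reg_cond_XY MX MY P KXY"
begin

lemma prob_space_KYX: "x \<in> space MX \<Longrightarrow> prob_space (KYX x)"
  and sets_KYX: "x \<in> space MX \<Longrightarrow> sets (KYX x) = sets MY"
  using KYX by (auto simp: reg_cond_YX_def)

lemma prob_space_KXY: "y \<in> space MY \<Longrightarrow> prob_space (KXY y)"
  and sets_KXY: "y \<in> space MY \<Longrightarrow> sets (KXY y) = sets MX"
  using KXY by (auto simp: reg_cond_XY_def)

lemma measurable_KYX[measurable]: "KYX \<in> MX \<rightarrow>\<^sub>M subprob_algebra MY"
  using KYX by (intro kernel_measurable_subprob_algebra) (auto simp: reg_cond_YX_def)

lemma measurable_KXY[measurable]: "KXY \<in> MY \<rightarrow>\<^sub>M subprob_algebra MX"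
  using KXY by (intro kernel_measurable_subprob_algebra) (auto simp: reg_cond_XY_def)

sublocale X: kernel_disintegration MX MY P KYX
proof (rule kernel_disintegration.intro[OF prob_space_P sets_P measurable_KYX])
  fix A B assume A: "A \<in> sets MX" and B: "B \<in> sets MY"
  have snd_B: "snd -` B \<inter> space P = space MX \<times> B"
    and A_B: "fst -` A \<inter> snd -` B \<inter> space P = A \<times> B"
    using sets.sets_into_space[OF A] sets.sets_into_space[OF B] by (auto simp: space_P)
  have "emeasure P (fst -` A \<inter> snd -` B \<inter> space P) = (\<integral>\<^sup>+x. indicator A x * emeasure (KYX x) B \<partial>PX)"
  proof (rule emeasure_Int_vimage_eq_cond_kernel[OF prob_space_P])
    show "AE \<omega> in P. real_cond_exp P (vimage_algebra (space P) fst MX) (indicator (snd -` B \<inter> space P)) \<omega>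
        = measure (KYX (fst \<omega>)) B"
      using KYX B unfolding reg_cond_YX_def sigX_def snd_B by auto
  qed (use KYX A B prob_space_KYX in \<open>auto simp: reg_cond_YX_def\<close>)
  then show "emeasure P (A \<times> B) = (\<integral>\<^sup>+x. indicator A x * emeasure (KYX x) B \<partial>PX)"
    by (simp add: A_B)
qed

abbreviation P_swap :: "('b \<times> 'a) measure" where
  "P_swap \<equiv> distr P (MY \<Otimes>\<^sub>M MX) (\<lambda>\<omega>. (snd \<omega>, fst \<omega>))"

lemma distr_P_swap_fst: "distr P_swap MY fst = PY"
  by (subst distr_distr) (auto simp: comp_def)

sublocale Y: kernel_disintegration MY MX P_swap KXY
proof (rule kernel_disintegration.intro[OF _ _ measurable_KXY])
  show "prob_space P_swap"
    by (rule prob_space.prob_space_distr[OF prob_space_P]) measurable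
  show "sets P_swap = sets (MY \<Otimes>\<^sub>M MX)"
    by simp
next
  fix B A assume B: "B \<in> sets MY" and A: "A \<in> sets MX"
  have fst_A: "fst -` A \<inter> space P = A \<times> space MY"
    and B_A: "snd -` B \<inter> fst -` A \<inter> space P = A \<times> B"
    and swap_B_A: "(\<lambda>\<omega>. (snd \<omega>, fst \<omega>)) -` (B \<times> A) \<inter> space P = A \<times> B"
    using sets.sets_into_space[OF A] sets.sets_into_space[OF B] by (auto simp: space_P)
  have "emeasure P (snd -` B \<inter> fst -` A \<inter> space P) = (\<integral>\<^sup>+y. indicator B y * emeasure (KXY y) A \<partial>PY)"
  proof (rule emeasure_Int_vimage_eq_cond_kernel[OF prob_space_P])
    show "AE \<omega> in P. real_cond_exp P (vimage_algebra (space P) snd MY) (indicator (fst -` A \<inter> space P)) \<omega>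
        = measure (KXY (snd \<omega>)) A"
      using KXY A unfolding reg_cond_XY_def sigY_def fst_A by auto
  qed (use KXY A B prob_space_KXY in \<open>auto simp: reg_cond_XY_def\<close>)
  then show "emeasure P_swap (B \<times> A) = (\<integral>\<^sup>+y. indicator B y * emeasure (KXY y) A \<partial>distr P_swap MY fst)"
    using A B by (simp add: emeasure_distr B_A swap_B_A distr_P_swap_fst)
qed

lemma nn_integral_disintegration_KXY:
  assumes [measurable]: "f \<in> borel_measurable (MX \<Otimes>\<^sub>M MY)"
  shows "(\<integral>\<^sup>+\<omega>. f \<omega> \<partial>P) = (\<integral>\<^sup>+y. \<integral>\<^sup>+x. f (x, y) \<partial>KXY y \<partial>PY)"
proof -
  have "(\<integral>\<^sup>+\<omega>. f \<omega> \<partial>P) = (\<integral>\<^sup>+\<omega>. f (snd \<omega>, fst \<omega>) \<partial>P_swap)"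
    by (subst nn_integral_distr) auto
  also have "\<dots> = (\<integral>\<^sup>+y. \<integral>\<^sup>+x. f (x, y) \<partial>KXY y \<partial>PY)"
    by (subst Y.nn_integral_disintegration) (auto simp: distr_P_swap_fst)
  finally show ?thesis .
qed

lemma AE_disintegration_KXY:
  assumes "AE \<omega> in P. Q \<omega>"
  shows "AE y in PY. AE x in KXY y. Q (x, y)"
proof -
  have swap_swap: "distr P_swap (MX \<Otimes>\<^sub>M MY) (\<lambda>\<omega>. (snd \<omega>, fst \<omega>)) = P"
    by (subst distr_distr) (auto simp: comp_def distr_id2 sets_P)
  have "AE \<omega> in distr P_swap (MX \<Otimes>\<^sub>M MY) (\<lambda>\<omega>. (snd \<omega>, fst \<omega>)). Q \<omega>"
    by (subst swap_swap) (fact assms)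
  then have "AE \<omega> in P_swap. Q (snd \<omega>, fst \<omega>)"
    by (rule AE_distrD[rotated]) measurable
  from Y.AE_disintegration[OF this] show ?thesis
    by (simp only: distr_P_swap_fst prod.sel)
qed

definition cond_mean :: "('b \<Rightarrow> real) \<Rightarrow> 'a \<Rightarrow> real" where
  "cond_mean G x = (\<integral>y. G y \<partial>KYX x)"

lemma measurable_cond_mean[measurable]: "G \<in> borel_measurable MY \<Longrightarrow> cond_mean G \<in> borel_measurable MX"
  unfolding cond_mean_def
  by (rule measurable_compose[OF measurable_KYX integral_measurable_subprob_algebra])

lemma measurable_nn_integral_KYX[measurable]:
  "G \<in> borel_measurable MY \<Longrightarrow> (\<lambda>x. \<integral>\<^sup>+y. G y \<partial>KYX x) \<in> borel_measurable MX"
  by (rule measurable_compose[OF measurable_KYX nn_integral_measurable_subprob_algebra])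

lemma measurable_integral_KXY[measurable]:
  fixes F :: "'a \<Rightarrow> real"
  shows "F \<in> borel_measurable MX \<Longrightarrow> (\<lambda>y. \<integral>x. F x \<partial>KXY y) \<in> borel_measurable MY"
  by (rule measurable_compose[OF measurable_KXY integral_measurable_subprob_algebra])

lemma measurable_KYX_space: "x \<in> space MX \<Longrightarrow> G \<in> borel_measurable MY \<Longrightarrow> G \<in> borel_measurable (KYX x)"
  by (simp add: measurable_cong_sets[OF sets_KYX refl])

lemma measurable_KXY_space: "y \<in> space MY \<Longrightarrow> F \<in> borel_measurable MX \<Longrightarrow> F \<in> borel_measurable (KXY y)"
  by (simp add: measurable_cong_sets[OF sets_KXY refl])

lemma nn_integral_mult_KYX:
  assumes [measurable]: "F \<in> borel_measurable MX" "G \<in> borel_measurable MY"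
    and F_nonneg: "AE x in PX. 0 \<le> F x"
  shows "(\<integral>\<^sup>+\<omega>. ennreal (F (fst \<omega>) * G (snd \<omega>)) \<partial>P)
    = (\<integral>\<^sup>+x. ennreal (F x) * (\<integral>\<^sup>+y. ennreal (G y) \<partial>KYX x) \<partial>PX)"
proof -
  have "(\<integral>\<^sup>+\<omega>. ennreal (F (fst \<omega>) * G (snd \<omega>)) \<partial>P) = (\<integral>\<^sup>+x. \<integral>\<^sup>+y. ennreal (F x * G y) \<partial>KYX x \<partial>PX)"
    by (subst X.nn_integral_disintegration) simp_all
  also have "\<dots> = (\<integral>\<^sup>+x. ennreal (F x) * (\<integral>\<^sup>+y. ennreal (G y) \<partial>KYX x) \<partial>PX)"
    using F_nonneg AE_space[of PX]
    by (intro nn_integral_cong_AE, eventually_elim)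
       (simp add: ennreal_mult' nn_integral_cmult measurable_KYX_space)
  finally show ?thesis .
qed

lemma nn_integral_mult_KXY:
  assumes [measurable]: "F \<in> borel_measurable MX" "G \<in> borel_measurable MY"
    and G_nonneg: "AE y in PY. 0 \<le> G y"
  shows "(\<integral>\<^sup>+\<omega>. ennreal (F (fst \<omega>) * G (snd \<omega>)) \<partial>P)
    = (\<integral>\<^sup>+y. ennreal (G y) * (\<integral>\<^sup>+x. ennreal (F x) \<partial>KXY y) \<partial>PY)"
proof -
  have "(\<integral>\<^sup>+\<omega>. ennreal (F (fst \<omega>) * G (snd \<omega>)) \<partial>P) = (\<integral>\<^sup>+y. \<integral>\<^sup>+x. ennreal (G y * F x) \<partial>KXY y \<partial>PY)"
    by (subst nn_integral_disintegration_KXY) (simp_all add: mult.commute)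
  also have "\<dots> = (\<integral>\<^sup>+y. ennreal (G y) * (\<integral>\<^sup>+x. ennreal (F x) \<partial>KXY y) \<partial>PY)"
    using G_nonneg AE_space[of PY]
    by (intro nn_integral_cong_AE, eventually_elim)
       (simp add: ennreal_mult' nn_integral_cmult measurable_KXY_space)
  finally show ?thesis .
qed

lemma distr_fst_density_mult:
  assumes [measurable]: "F \<in> borel_measurable MX" "G \<in> borel_measurable MY"
    and F_nonneg: "AE x in PX. 0 \<le> F x"
  shows "distr (density P (\<lambda>\<omega>. ennreal (F (fst \<omega>) * G (snd \<omega>)))) MX fst
    = density PX (\<lambda>x. ennreal (F x) * (\<integral>\<^sup>+y. ennreal (G y) \<partial>KYX x))"
proof (rule measure_eqI)
  fix A assume "A \<in> sets (distr (density P (\<lambda>\<omega>. ennreal (F (fst \<omega>) * G (snd \<omega>)))) MX fst)"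
  then have [measurable]: "A \<in> sets MX"
    by simp
  have "emeasure (distr (density P (\<lambda>\<omega>. ennreal (F (fst \<omega>) * G (snd \<omega>)))) MX fst) A
      = (\<integral>\<^sup>+\<omega>. ennreal (F (fst \<omega>) * G (snd \<omega>)) * indicator (fst -` A \<inter> space P) \<omega> \<partial>P)"
    by (simp add: emeasure_distr emeasure_density)
  also have "\<dots> = (\<integral>\<^sup>+\<omega>. ennreal ((indicator A (fst \<omega>) * F (fst \<omega>)) * G (snd \<omega>)) \<partial>P)"
    by (intro nn_integral_cong) (simp split: split_indicator)
  also have "\<dots> = (\<integral>\<^sup>+x. ennreal (indicator A x * F x) * (\<integral>\<^sup>+y. ennreal (G y) \<partial>KYX x) \<partial>PX)"
    using F_nonneg by (intro nn_integral_mult_KYX) (auto elim: AE_mp)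
  also have "\<dots> = emeasure (density PX (\<lambda>x. ennreal (F x) * (\<integral>\<^sup>+y. ennreal (G y) \<partial>KYX x))) A"
    by (auto simp: emeasure_density intro!: nn_integral_cong split: split_indicator)
  finally show "emeasure (distr (density P (\<lambda>\<omega>. ennreal (F (fst \<omega>) * G (snd \<omega>)))) MX fst) A
      = emeasure (density PX (\<lambda>x. ennreal (F x) * (\<integral>\<^sup>+y. ennreal (G y) \<partial>KYX x))) A" .
qed simp

lemma distr_snd_density_mult:
  assumes [measurable]: "F \<in> borel_measurable MX" "G \<in> borel_measurable MY"
    and G_nonneg: "AE y in PY. 0 \<le> G y"
  shows "distr (density P (\<lambda>\<omega>. ennreal (F (fst \<omega>) * G (snd \<omega>)))) MY snd
    = density PY (\<lambda>y. ennreal (G y) * (\<integral>\<^sup>+x. ennreal (F x) \<partial>KXY y))"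
proof (rule measure_eqI)
  fix B assume "B \<in> sets (distr (density P (\<lambda>\<omega>. ennreal (F (fst \<omega>) * G (snd \<omega>)))) MY snd)"
  then have [measurable]: "B \<in> sets MY"
    by simp
  have "emeasure (distr (density P (\<lambda>\<omega>. ennreal (F (fst \<omega>) * G (snd \<omega>)))) MY snd) B
      = (\<integral>\<^sup>+\<omega>. ennreal (F (fst \<omega>) * G (snd \<omega>)) * indicator (snd -` B \<inter> space P) \<omega> \<partial>P)"
    by (simp add: emeasure_distr emeasure_density)
  also have "\<dots> = (\<integral>\<^sup>+\<omega>. ennreal (F (fst \<omega>) * (indicator B (snd \<omega>) * G (snd \<omega>))) \<partial>P)"
    by (intro nn_integral_cong) (simp split: split_indicator)
  also have "\<dots> = (\<integral>\<^sup>+y. ennreal (indicator B y * G y) * (\<integral>\<^sup>+x. ennreal (F x) \<partial>KXY y) \<partial>PY)"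
    using G_nonneg by (intro nn_integral_mult_KXY) (auto elim: AE_mp)
  also have "\<dots> = emeasure (density PY (\<lambda>y. ennreal (G y) * (\<integral>\<^sup>+x. ennreal (F x) \<partial>KXY y))) B"
    by (auto simp: emeasure_density intro!: nn_integral_cong split: split_indicator)
  finally show "emeasure (distr (density P (\<lambda>\<omega>. ennreal (F (fst \<omega>) * G (snd \<omega>)))) MY snd) B
      = emeasure (density PY (\<lambda>y. ennreal (G y) * (\<integral>\<^sup>+x. ennreal (F x) \<partial>KXY y))) B" .
qed simp

context
  fixes G :: "'b \<Rightarrow> real"
  assumes G_measurable[measurable]: "G \<in> borel_measurable MY" and G_int: "integrable PY G"
    and G_pos: "AE y in PY. 0 < G y"
begin

lemma nn_integral_nn_integral_KYX: "(\<integral>\<^sup>+x. \<integral>\<^sup>+y. ennreal (G y) \<partial>KYX x \<partial>PX) = ennreal (\<integral>y. G y \<partial>PY)"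
proof -
  have "(\<integral>\<^sup>+x. \<integral>\<^sup>+y. ennreal (G y) \<partial>KYX x \<partial>PX) = (\<integral>\<^sup>+\<omega>. ennreal (G (snd \<omega>)) \<partial>P)"
    by (simp add: X.nn_integral_disintegration)
  also have "\<dots> = (\<integral>\<^sup>+y. ennreal (G y) \<partial>PY)"
    by (simp add: nn_integral_distr)
  also have "\<dots> = ennreal (\<integral>y. G y \<partial>PY)"
    using G_pos by (intro nn_integral_eq_integral G_int) (auto elim: AE_mp)
  finally show ?thesis .
qed

lemma AE_cond_mean: "AE x in PX. (\<integral>\<^sup>+y. ennreal (G y) \<partial>KYX x) = ennreal (cond_mean G x) \<and> 0 < cond_mean G x"
proof -
  have "AE x in PX. (\<integral>\<^sup>+y. ennreal (G y) \<partial>KYX x) \<noteq> \<infinity>"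
    by (rule nn_integral_PInf_AE) (simp_all add: nn_integral_nn_integral_KYX)
  moreover have "AE \<omega> in P. 0 < G (snd \<omega>)"
    by (rule AE_distrD[OF _ G_pos]) measurable
  then have "AE x in PX. AE y in KYX x. 0 < G y"
    using X.AE_disintegration[of "\<lambda>\<omega>. 0 < G (snd \<omega>)"] by simp
  moreover note AE_space
  ultimately show ?thesis
  proof eventually_elim
    case (elim x)
    then have "prob_space (KYX x)" "G \<in> borel_measurable (KYX x)"
      by (auto intro: prob_space_KYX measurable_KYX_space)
    from prob_space.integrable_pos_of_nn_integral_finite[OF this elim(2,1)] show ?case
      by (simp add: cond_mean_def)
  qed
qed

lemma nn_integral_cond_mean: "(\<integral>\<^sup>+x. ennreal (cond_mean G x) \<partial>PX) = ennreal (\<integral>y. G y \<partial>PY)"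
  using AE_cond_mean by (subst nn_integral_nn_integral_KYX[symmetric]) (auto intro!: nn_integral_cong_AE)

lemma integrable_cond_mean: "integrable PX (cond_mean G)"
  and integral_cond_mean: "(\<integral>x. cond_mean G x \<partial>PX) = (\<integral>y. G y \<partial>PY)"
proof -
  have "integrable PX (cond_mean G) \<and> (\<integral>x. cond_mean G x \<partial>PX) = (\<integral>y. G y \<partial>PY)"
  proof (rule nn_integral_eq_integrable[THEN iffD1])
    show "AE x in PX. 0 \<le> cond_mean G x"
      using AE_cond_mean by (auto elim: AE_mp)
    show "0 \<le> (\<integral>y. G y \<partial>PY)"
      using G_pos by (intro integral_nonneg_AE) (auto elim: AE_mp)
  qed (simp_all add: nn_integral_cond_mean)
  then show "integrable PX (cond_mean G)" "(\<integral>x. cond_mean G x \<partial>PX) = (\<integral>y. G y \<partial>PY)"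
    by simp_all
qed

lemma real_cond_exp_cond_mean:
  "AE \<omega> in P. real_cond_exp P (sigX P MX) (\<lambda>\<omega>. G (snd \<omega>)) \<omega> = cond_mean G (fst \<omega>)"
proof -
  interpret sigma_finite_subalgebra P "sigX P MX"
    by (rule sigma_finite_subalgebra_sigX)
  show ?thesis
  proof (rule real_cond_exp_charact)
    fix A assume "A \<in> sets (sigX P MX)"
    moreover have "fst \<in> space P \<rightarrow> space MX"
      by (auto simp: space_P)
    ultimately obtain A' where [measurable]: "A' \<in> sets MX" and A: "A = fst -` A' \<inter> space P"
      by (auto simp: sigX_def sets_vimage_algebra2)
    have "(\<integral>\<omega>. indicator A' (fst \<omega>) * G (snd \<omega>) \<partial>P)
        = enn2real (\<integral>\<^sup>+\<omega>. ennreal (indicator A' (fst \<omega>) * G (snd \<omega>)) \<partial>P)"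
      using AE_distrD[OF _ G_pos] by (intro integral_eq_nn_integral) (auto elim: AE_mp)
    also have "(\<integral>\<^sup>+\<omega>. ennreal (indicator A' (fst \<omega>) * G (snd \<omega>)) \<partial>P)
        = (\<integral>\<^sup>+x. ennreal (indicator A' x) * (\<integral>\<^sup>+y. ennreal (G y) \<partial>KYX x) \<partial>PX)"
      by (rule nn_integral_mult_KYX) auto
    also have "\<dots> = (\<integral>\<^sup>+x. ennreal (indicator A' x * cond_mean G x) \<partial>PX)"
      using AE_cond_mean by (auto intro!: nn_integral_cong_AE simp: ennreal_mult')
    also have "\<dots> = (\<integral>\<^sup>+\<omega>. ennreal (indicator A' (fst \<omega>) * cond_mean G (fst \<omega>)) \<partial>P)"
      by (simp add: nn_integral_distr)
    also have "enn2real \<dots> = (\<integral>\<omega>. indicator A' (fst \<omega>) * cond_mean G (fst \<omega>) \<partial>P)"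
      using AE_distrD[OF _ AE_cond_mean]
      by (intro integral_eq_nn_integral[symmetric]) (auto elim: AE_mp)
    finally have "(\<integral>\<omega>. indicator A' (fst \<omega>) * G (snd \<omega>) \<partial>P)
        = (\<integral>\<omega>. indicator A' (fst \<omega>) * cond_mean G (fst \<omega>) \<partial>P)" .
    moreover have "(\<integral>\<omega>\<in>A. f \<omega> \<partial>P) = (\<integral>\<omega>. indicator A' (fst \<omega>) * f \<omega> \<partial>P)" for f :: "_ \<Rightarrow> real"
      unfolding set_lebesgue_integral_def A
      by (intro Bochner_Integration.integral_cong) (auto split: split_indicator)
    ultimately show "(\<integral>\<omega>\<in>A. G (snd \<omega>) \<partial>P) = (\<integral>\<omega>\<in>A. cond_mean G (fst \<omega>) \<partial>P)"
      by simp
  next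
    show "integrable P (\<lambda>\<omega>. G (snd \<omega>))"
      using G_int by (simp add: integrable_distr_eq)
    show "integrable P (\<lambda>\<omega>. cond_mean G (fst \<omega>))"
      using integrable_cond_mean by (simp add: integrable_distr_eq)
  qed (simp add: measurable_fst_sigX)
qed

end

lemma AE_eq_cond_mean_of_real_cond_exp:
  assumes [measurable]: "G \<in> borel_measurable MY" "integrable PY G" "AE y in PY. 0 < G y"
    and [measurable]: "H \<in> borel_measurable MX"
    and H: "AE \<omega> in P. real_cond_exp P (sigX P MX) (\<lambda>\<omega>. G (snd \<omega>)) \<omega> = H (fst \<omega>)"
  shows "AE x in PX. H x = cond_mean G x"
proof -
  have "AE \<omega> in P. H (fst \<omega>) = cond_mean G (fst \<omega>)"
    using H real_cond_exp_cond_mean[OF assms(1-3)] by eventually_elim simp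
  then show ?thesis
    by (subst AE_distr_iff) simp_all
qed

end

section \<open>The EM step\<close>

locale EM_setting = cond_kernels +
  fixes h :: "'a \<Rightarrow> real"
  assumes h_density: "prob_density PX h" and h_pos: "\<forall>x\<in>space MX. 0 < h x"
begin

lemma measurable_h[measurable]: "h \<in> borel_measurable MX"
  using h_density by (simp add: prob_density_def measurable_cong_sets[OF sets_distr refl])

(* For G = g_n this is h(x) q^(n)_{Y|X=x}(y), the density dQ_n/dP. *)
definition EM_density :: "('b \<Rightarrow> real) \<Rightarrow> 'a \<times> 'b \<Rightarrow> real" where
  "EM_density G \<omega> = G (snd \<omega>) * h (fst \<omega>) / cond_mean G (fst \<omega>)"

definition EM_factor :: "('b \<Rightarrow> real) \<Rightarrow> 'b \<Rightarrow> real" where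
  "EM_factor G y = (\<integral>x. h x / cond_mean G x \<partial>KXY y)"

lemma measurable_EM_density[measurable]:
  assumes [measurable]: "G \<in> borel_measurable MY"
  shows "EM_density G \<in> borel_measurable P"
  unfolding EM_density_def by measurable

lemma measurable_EM_factor[measurable]: "G \<in> borel_measurable MY \<Longrightarrow> EM_factor G \<in> borel_measurable MY"
  unfolding EM_factor_def by measurable

lemma EM_density_eq: "EM_density G = (\<lambda>\<omega>. h (fst \<omega>) / cond_mean G (fst \<omega>) * G (snd \<omega>))"
  by (auto simp: EM_density_def fun_eq_iff)

context
  fixes G :: "'b \<Rightarrow> real"
  assumes G_measurable[measurable]: "G \<in> borel_measurable MY" and G_int: "integrable PY G"
    and G_pos: "AE y in PY. 0 < G y"
begin

lemma AE_h_div_cond_mean_pos: "AE x in PX. 0 < h x / cond_mean G x"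
  using AE_cond_mean[OF G_measurable G_int G_pos] AE_space
  by eventually_elim (simp add: h_pos)

lemma distr_fst_EM_density: "distr (density P (EM_density G)) MX fst = density PX h"
proof -
  have "distr (density P (EM_density G)) MX fst
      = density PX (\<lambda>x. ennreal (h x / cond_mean G x) * (\<integral>\<^sup>+y. ennreal (G y) \<partial>KYX x))"
    unfolding EM_density_eq using AE_h_div_cond_mean_pos
    by (intro distr_fst_density_mult) (auto elim: AE_mp)
  also have "\<dots> = density PX h"
  proof (rule density_cong)
    show "AE x in PX. ennreal (h x / cond_mean G x) * (\<integral>\<^sup>+y. ennreal (G y) \<partial>KYX x) = ennreal (h x)"
      using AE_cond_mean[OF G_measurable G_int G_pos] AE_h_div_cond_mean_pos
    proof eventually_elim
      case (elim x)
      then show ?case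
        by (simp flip: ennreal_mult')
    qed
  qed simp_all
  finally show ?thesis .
qed

lemma prob_space_EM_density: "prob_space (density P (EM_density G))"
proof (rule prob_space_distrD)
  show "prob_space (distr (density P (EM_density G)) MX fst)"
    using prob_density_nn_integral[OF h_density]
    by (simp add: distr_fst_EM_density prob_space_density_iff)
qed measurable

lemma AE_EM_density_factors_pos:
  "AE \<omega> in P. 0 < h (fst \<omega>) / cond_mean G (fst \<omega>) \<and> 0 < G (snd \<omega>)"
proof -
  have "AE \<omega> in P. 0 < G (snd \<omega>)"
    by (rule AE_distrD[OF _ G_pos]) measurable
  moreover have "AE \<omega> in P. 0 < h (fst \<omega>) / cond_mean G (fst \<omega>)"
    by (rule AE_distrD[OF _ AE_h_div_cond_mean_pos]) measurable
  ultimately show ?thesis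
    by eventually_elim simp
qed

lemma AE_EM_density_pos: "AE \<omega> in P. 0 < EM_density G \<omega>"
  using AE_EM_density_factors_pos by eventually_elim (auto simp only: EM_density_eq intro: mult_pos_pos)

lemma prob_density_EM_density: "prob_density P (EM_density G)"
proof (rule prob_densityI_nn_integral)
  show "AE \<omega> in P. 0 \<le> EM_density G \<omega>"
    using AE_EM_density_pos by (auto elim: AE_mp)
  show "(\<integral>\<^sup>+\<omega>. ennreal (EM_density G \<omega>) \<partial>P) = 1"
    using prob_space_EM_density by (simp add: prob_space_density_iff)
qed (simp add: EM_density_def)

lemma AE_EM_factor:
  "AE y in PY. (\<integral>\<^sup>+x. ennreal (h x / cond_mean G x) \<partial>KXY y) = ennreal (EM_factor G y) \<and> 0 < EM_factor G y"
proof -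
  have snd_marginal: "distr (density P (EM_density G)) MY snd
      = density PY (\<lambda>y. ennreal (G y) * (\<integral>\<^sup>+x. ennreal (h x / cond_mean G x) \<partial>KXY y))"
    unfolding EM_density_eq using G_pos by (intro distr_snd_density_mult) (auto elim: AE_mp)
  have "prob_space (distr (density P (EM_density G)) MY snd)"
    by (intro prob_space.prob_space_distr prob_space_EM_density) measurable
  then have "(\<integral>\<^sup>+y. ennreal (G y) * (\<integral>\<^sup>+x. ennreal (h x / cond_mean G x) \<partial>KXY y) \<partial>PY) = 1"
    by (simp add: snd_marginal prob_space_density_iff)
  then have "AE y in PY. ennreal (G y) * (\<integral>\<^sup>+x. ennreal (h x / cond_mean G x) \<partial>KXY y) \<noteq> \<infinity>"
    by (intro nn_integral_PInf_AE) simp_all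
  moreover have "AE \<omega> in P. 0 < h (fst \<omega>) / cond_mean G (fst \<omega>)"
    by (rule AE_distrD[OF _ AE_h_div_cond_mean_pos]) measurable
  then have "AE y in PY. AE x in KXY y. 0 < h x / cond_mean G x"
    using AE_disintegration_KXY[of "\<lambda>\<omega>. 0 < h (fst \<omega>) / cond_mean G (fst \<omega>)"] by simp
  moreover note G_pos AE_space
  ultimately show ?thesis
  proof eventually_elim
    case (elim y)
    then have "prob_space (KXY y)" "(\<lambda>x. h x / cond_mean G x) \<in> borel_measurable (KXY y)"
      and "(\<integral>\<^sup>+x. ennreal (h x / cond_mean G x) \<partial>KXY y) \<noteq> \<infinity>"
      by (auto intro: prob_space_KXY measurable_KXY_space simp: ennreal_mult_eq_top_iff)
    from prob_space.integrable_pos_of_nn_integral_finite[OF this(1,2) elim(2) this(3)] show ?case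
      by (simp add: EM_factor_def)
  qed
qed

lemma distr_snd_EM_density:
  "distr (density P (EM_density G)) MY snd = density PY (\<lambda>y. G y * EM_factor G y)"
proof -
  have "distr (density P (EM_density G)) MY snd
      = density PY (\<lambda>y. ennreal (G y) * (\<integral>\<^sup>+x. ennreal (h x / cond_mean G x) \<partial>KXY y))"
    unfolding EM_density_eq using G_pos by (intro distr_snd_density_mult) (auto elim: AE_mp)
  also have "\<dots> = density PY (\<lambda>y. G y * EM_factor G y)"
    using AE_EM_factor G_pos
    by (intro density_cong) (auto elim!: AE_mp simp: ennreal_mult' EM_factor_def)
  finally show ?thesis .
qed

lemma FJS_EM_density: "FJS MX MY P (density P (EM_density G))"
  unfolding FJS_def
proof (intro exI conjI)
  show "density P (EM_density G)
      = density P (\<lambda>\<omega>. ennreal (max 0 (h (fst \<omega>) / cond_mean G (fst \<omega>)) * max 0 (G (snd \<omega>))))"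
    using AE_EM_density_factors_pos
    by (intro density_cong) (auto simp: EM_density_eq elim!: AE_mp)
qed auto

end

lemma EM_fixed_point_FJS:
  assumes G: "prob_density PY G" and G_pos: "AE y in PY. 0 < G y"
    and fixed_point: "AE y in PY. EM_factor G y = 1"
  shows "prob_density P (EM_density G) \<and> prob_space (density P (EM_density G))
    \<and> FJS MX MY P (density P (EM_density G))
    \<and> distr (density P (EM_density G)) MX fst = density PX h
    \<and> distr (density P (EM_density G)) MY snd = density PY G"
proof -
  note G' = prob_density_PYD[OF G] G_pos
  have "distr (density P (EM_density G)) MY snd = density PY G"
    unfolding distr_snd_EM_density[OF G'] using fixed_point G'
    by (intro density_cong) (auto elim: AE_mp)
  then show ?thesis
    using prob_density_EM_density[OF G'] prob_space_EM_density[OF G'] FJS_EM_density[OF G']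
      distr_fst_EM_density[OF G'] by simp
qed

lemma EM_factor_eq_1_of_fixed_point:
  assumes G: "prob_density PY G" and G_pos: "AE y in PY. 0 < G y"
    and G_eq: "AE y in PY. G y = (\<integral>x. q x y * h x \<partial>KXY y)"
    and q_eq: "AE y in PY. AE x in KXY y. q x y = G y / cond_mean G x"
  shows "AE y in PY. EM_factor G y = 1"
  using G_eq q_eq G_pos AE_space
proof eventually_elim
  case (elim y)
  note [measurable] = prob_density_PYD(1)[OF G]
  \<comment> \<open>q is not assumed measurable: integrability of q(-, y) h comes from its integral being G y \<noteq> 0\<close>
  have "integrable (KXY y) (\<lambda>x. q x y * h x)"
    using elim(1,3) not_integrable_integral_eq by fastforce
  then have "G y = (\<integral>x. G y * (h x / cond_mean G x) \<partial>KXY y)"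
    using elim(1,2,4)
    by (subst elim(1), intro integral_cong_AE)
       (auto elim: AE_mp intro: borel_measurable_integrable measurable_KXY_space)
  also have "\<dots> = G y * EM_factor G y"
    unfolding EM_factor_def by (rule integral_mult_right_zero)
  finally show ?case
    using elim(3) by simp
qed

lemma KL_cond_mean_eq_integral_nonneg:
  assumes G: "prob_density PY G" and G_pos: "AE y in PY. 0 < G y"
    and int: "integrable PX (\<lambda>x. h x * ln (h x / cond_mean G x))"
  shows "integrable PX (\<lambda>x. h x * ln (h x / cond_mean G x) - h x + cond_mean G x)"
    and "(\<integral>x. h x * ln (h x / cond_mean G x) - h x + cond_mean G x \<partial>PX) = KL PX h (cond_mean G)"
    and "AE x in PX. 0 \<le> h x * ln (h x / cond_mean G x) - h x + cond_mean G x"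
proof -
  note G_meas[measurable] = prob_density_PYD(1)[OF G] and G_int = prob_density_PYD(2)[OF G]
  have h_int: "integrable PX h" "(\<integral>x. h x \<partial>PX) = 1"
    using h_density by (simp_all add: prob_density_def)
  note c_int = integrable_cond_mean[OF G_meas G_int G_pos] integral_cond_mean[OF G_meas G_int G_pos]
  show "integrable PX (\<lambda>x. h x * ln (h x / cond_mean G x) - h x + cond_mean G x)"
    using int h_int c_int by simp
  show "(\<integral>x. h x * ln (h x / cond_mean G x) - h x + cond_mean G x \<partial>PX) = KL PX h (cond_mean G)"
    using int h_int c_int G by (simp add: KL_def prob_density_def)
  show "AE x in PX. 0 \<le> h x * ln (h x / cond_mean G x) - h x + cond_mean G x"
    using AE_cond_mean[OF G_meas G_int G_pos] AE_space
    by eventually_elim (use mult_ln_div_ge_diff h_pos in force)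
qed

lemma KL_cond_mean_of_real_cond_exp:
  assumes G: "prob_density PY G" and G_pos: "AE y in PY. 0 < G y"
    and H_meas[measurable]: "H \<in> borel_measurable MX"
    and H: "AE \<omega> in P. real_cond_exp P (sigX P MX) (\<lambda>\<omega>. G (snd \<omega>)) \<omega> = H (fst \<omega>)"
    and int: "integrable PX (\<lambda>x. h x * \<bar>ln (h x / H x)\<bar>)"
  shows "KL_wd PX h H" and "KL PX h H = KL PX h (cond_mean G)"
    and "integrable PX (\<lambda>x. h x * ln (h x / cond_mean G x))"
proof -
  note G_meas[measurable] = prob_density_PYD(1)[OF G] and G_int = prob_density_PYD(2)[OF G]
  have H_eq: "AE x in PX. H x = cond_mean G x"
    by (rule AE_eq_cond_mean_of_real_cond_exp[OF G_meas G_int G_pos H_meas H])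
  have int_H: "integrable PX (\<lambda>x. h x * ln (h x / H x))"
    using int by (rule Bochner_Integration.integrable_bound) (auto simp: abs_mult)
  have "AE x in PX. h x * ln (h x / H x) = h x * ln (h x / cond_mean G x)"
    using H_eq by (auto elim: AE_mp)
  then show "integrable PX (\<lambda>x. h x * ln (h x / cond_mean G x))"
    by (rule integrable_cong_AE_imp[OF int_H, rotated]) measurable
  show "KL PX h H = KL PX h (cond_mean G)"
    using H_eq by (rule KL_cong_AE[rotated 3]) measurable
  have H_pos: "AE x in PX. 0 < H x"
    using AE_cond_mean[OF G_meas G_int G_pos] H_eq by eventually_elim simp
  have "(\<integral>\<^sup>+x. ennreal (H x) \<partial>PX) = (\<integral>\<^sup>+x. ennreal (cond_mean G x) \<partial>PX)"
    using H_eq by (intro nn_integral_cong_AE) (auto elim: AE_mp)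
  also have "\<dots> = 1"
    using nn_integral_cond_mean[OF G_meas G_int G_pos] G by (simp add: prob_density_def)
  finally have "prob_density PX H"
    using H_pos by (intro prob_densityI_nn_integral) (auto elim: AE_mp)
  moreover have "AE x in PX. 0 < h x \<and> 0 < H x"
    using H_pos AE_space by eventually_elim (simp add: h_pos)
  ultimately show "KL_wd PX h H"
    using h_density int by (simp add: KL_wd_def)
qed

end

section \<open>The EM iteration\<close>

locale EM_iteration = EM_setting +
  fixes gs :: "nat \<Rightarrow> 'b \<Rightarrow> real"
  assumes gs_0: "prob_density PY (gs 0)" and gs_0_pos: "AE y in PY. 0 < gs 0 y"
    and gs_Suc_integral: "\<forall>n. \<forall>y\<in>space MY. gs (Suc n) y = (\<integral>x. EM_q KYX gs n x y * h x \<partial>KXY y)"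
begin

lemma gs_Suc: "y \<in> space MY \<Longrightarrow> gs (Suc n) y = gs n y * EM_factor (gs n) y"
  using gs_Suc_integral
  by (simp add: EM_q_def EM_factor_def cond_mean_def flip: integral_mult_right_zero)

lemma measurable_gs_Suc: "gs n \<in> borel_measurable MY \<Longrightarrow> gs (Suc n) \<in> borel_measurable MY"
  by (subst measurable_cong[OF gs_Suc]) auto

lemma distr_snd_EM_density_gs:
  assumes "prob_density PY (gs n)" and pos: "AE y in PY. 0 < gs n y"
  shows "distr (density P (EM_density (gs n))) MY snd = density PY (gs (Suc n))"
proof -
  note meas[measurable] = prob_density_PYD(1)[OF assms(1)] and int = prob_density_PYD(2)[OF assms(1)]
  note [measurable] = measurable_gs_Suc[OF meas]
  have "distr (density P (EM_density (gs n))) MY snd = density PY (\<lambda>y. gs n y * EM_factor (gs n) y)"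
    by (rule distr_snd_EM_density[OF _ int pos]) measurable
  also have "\<dots> = density PY (gs (Suc n))"
    by (intro density_cong) (auto simp: gs_Suc)
  finally show ?thesis .
qed

lemma gs_density: "prob_density PY (gs n) \<and> (AE y in PY. 0 < gs n y)"
proof (induction n)
  case 0
  show ?case using gs_0 gs_0_pos by simp
next
  case (Suc n)
  then have density: "prob_density PY (gs n)" and pos: "AE y in PY. 0 < gs n y"
    by simp_all
  note meas[measurable] = prob_density_PYD(1)[OF density] and int = prob_density_PYD(2)[OF density]
  note [measurable] = measurable_gs_Suc[OF meas]
  have "prob_space (density PY (gs (Suc n)))"
    using prob_space_EM_density[OF meas int pos]
    by (simp flip: distr_snd_EM_density_gs[OF density pos] add: prob_space.prob_space_distr)
  moreover have "AE y in PY. 0 < gs (Suc n) y"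
    using AE_EM_factor[OF meas int pos] pos AE_space
    by eventually_elim (simp_all add: gs_Suc)
  ultimately show ?case
    by (auto intro!: prob_densityI_nn_integral simp: prob_space_density_iff elim: AE_mp)
qed

lemma measurable_gs[measurable]: "gs n \<in> borel_measurable MY"
  and integrable_gs: "integrable PY (gs n)"
  and AE_gs_pos: "AE y in PY. 0 < gs n y"
  using prob_density_PYD[OF gs_density[THEN conjunct1]] gs_density by simp_all

definition EM_joint :: "nat \<Rightarrow> ('a \<times> 'b) measure" where
  "EM_joint n = density P (\<lambda>\<omega>. ennreal (EM_density (gs n) \<omega>))"

lemma sets_EM_joint[measurable_cong]: "sets (EM_joint n) = sets (MX \<Otimes>\<^sub>M MY)"
  by (simp add: EM_joint_def sets_P)

lemma prob_space_EM_joint: "prob_space (EM_joint n)"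
  and distr_fst_EM_joint: "distr (EM_joint n) MX fst = density PX h"
  and distr_snd_EM_joint: "distr (EM_joint n) MY snd = density PY (gs (Suc n))"
  using prob_space_EM_density distr_fst_EM_density distr_snd_EM_density_gs gs_density
  by (simp_all add: EM_joint_def integrable_gs AE_gs_pos)

lemma integral_EM_joint_fst:
  assumes [measurable]: "F \<in> borel_measurable MX" and int: "integrable PX (\<lambda>x. h x * F x)"
  shows "integrable (EM_joint n) (\<lambda>\<omega>. F (fst \<omega>))"
    and "(\<integral>\<omega>. F (fst \<omega>) \<partial>EM_joint n) = (\<integral>x. h x * F x \<partial>PX)"
proof -
  have h_nonneg: "AE x in PX. 0 \<le> h x"
    using h_density by (simp add: prob_density_def)
  have "integrable (distr (EM_joint n) MX fst) F"
    using int h_nonneg by (simp add: distr_fst_EM_joint integrable_density)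
  then show "integrable (EM_joint n) (\<lambda>\<omega>. F (fst \<omega>))"
    by (simp add: integrable_distr_eq)
  have "(\<integral>\<omega>. F (fst \<omega>) \<partial>EM_joint n) = (\<integral>x. F x \<partial>distr (EM_joint n) MX fst)"
    by (rule integral_distr[symmetric]) measurable
  also have "\<dots> = (\<integral>x. h x * F x \<partial>PX)"
    using h_nonneg by (simp add: distr_fst_EM_joint integral_density)
  finally show "(\<integral>\<omega>. F (fst \<omega>) \<partial>EM_joint n) = (\<integral>x. h x * F x \<partial>PX)" .
qed

lemma integral_EM_joint_gs_ratio:
  shows "integrable (EM_joint n) (\<lambda>\<omega>. gs n (snd \<omega>) / gs (Suc n) (snd \<omega>))"
    and "(\<integral>\<omega>. gs n (snd \<omega>) / gs (Suc n) (snd \<omega>) \<partial>EM_joint n) = 1"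
proof -
  have "integrable (distr (EM_joint n) MY snd) (\<lambda>y. gs n y / gs (Suc n) y)"
    "(\<integral>y. gs n y / gs (Suc n) y \<partial>distr (EM_joint n) MY snd) = 1"
    using integrable_integral_density_ratio[OF _ _ AE_gs_pos integrable_gs, of "Suc n" n] gs_density[of n]
    by (simp_all add: distr_snd_EM_joint prob_density_def)
  then show "integrable (EM_joint n) (\<lambda>\<omega>. gs n (snd \<omega>) / gs (Suc n) (snd \<omega>))"
    and "(\<integral>\<omega>. gs n (snd \<omega>) / gs (Suc n) (snd \<omega>) \<partial>EM_joint n) = 1"
    by (simp_all add: integrable_distr_eq integral_distr)
qed

lemma integral_EM_joint_density_ratio:
  shows "integrable (EM_joint n) (\<lambda>\<omega>. EM_density (gs (Suc n)) \<omega> / EM_density (gs n) \<omega>)"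
    and "(\<integral>\<omega>. EM_density (gs (Suc n)) \<omega> / EM_density (gs n) \<omega> \<partial>EM_joint n) = 1"
  using integrable_integral_density_ratio[of "EM_density (gs n)" P "EM_density (gs (Suc n))"]
    AE_EM_density_pos[OF measurable_gs integrable_gs AE_gs_pos, of n]
    prob_density_EM_density[OF measurable_gs integrable_gs AE_gs_pos, of "Suc n"]
  by (auto simp: EM_joint_def prob_density_def)

lemma KL_diff_eq_integral:
  assumes int_n: "integrable PX (\<lambda>x. h x * ln (h x / cond_mean (gs n) x))"
    and int_Suc: "integrable PX (\<lambda>x. h x * ln (h x / cond_mean (gs (Suc n)) x))"
  shows "integrable PX (\<lambda>x. h x * ln (cond_mean (gs (Suc n)) x / cond_mean (gs n) x))"
    and "KL PX h (cond_mean (gs n)) - KL PX h (cond_mean (gs (Suc n)))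
      = (\<integral>x. h x * ln (cond_mean (gs (Suc n)) x / cond_mean (gs n) x) \<partial>PX)"
proof -
  have "AE x in PX. h x * ln (h x / cond_mean (gs n) x) - h x * ln (h x / cond_mean (gs (Suc n)) x)
      = h x * ln (cond_mean (gs (Suc n)) x / cond_mean (gs n) x)"
    using AE_cond_mean[OF measurable_gs integrable_gs AE_gs_pos, of n]
      AE_cond_mean[OF measurable_gs integrable_gs AE_gs_pos, of "Suc n"] AE_space
    by eventually_elim (simp add: h_pos ln_div algebra_simps)
  note eq = this
  have int_diff: "integrable PX (\<lambda>x. h x * ln (h x / cond_mean (gs n) x) - h x * ln (h x / cond_mean (gs (Suc n)) x))"
    using int_n int_Suc by (rule Bochner_Integration.integrable_diff)
  show "integrable PX (\<lambda>x. h x * ln (cond_mean (gs (Suc n)) x / cond_mean (gs n) x))"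
    by (rule integrable_cong_AE_imp[OF int_diff _ eq]) measurable
  have "KL PX h (cond_mean (gs n)) - KL PX h (cond_mean (gs (Suc n)))
      = (\<integral>x. h x * ln (h x / cond_mean (gs n) x) - h x * ln (h x / cond_mean (gs (Suc n)) x) \<partial>PX)"
    unfolding KL_def using int_n int_Suc by (rule Bochner_Integration.integral_diff[symmetric])
  also have "\<dots> = (\<integral>x. h x * ln (cond_mean (gs (Suc n)) x / cond_mean (gs n) x) \<partial>PX)"
    by (rule integral_cong_AE[OF _ _ eq]) measurable
  finally show "KL PX h (cond_mean (gs n)) - KL PX h (cond_mean (gs (Suc n)))
      = (\<integral>x. h x * ln (cond_mean (gs (Suc n)) x / cond_mean (gs n) x) \<partial>PX)" .
qed

lemma AE_EM_step_pos:
  "AE \<omega> in P. 0 < h (fst \<omega>) \<and> 0 < gs n (snd \<omega>) \<and> 0 < gs (Suc n) (snd \<omega>)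
    \<and> 0 < cond_mean (gs n) (fst \<omega>) \<and> 0 < cond_mean (gs (Suc n)) (fst \<omega>)"
proof -
  have gs_pos: "AE \<omega> in P. 0 < gs m (snd \<omega>)" for m
    by (rule AE_distrD[OF _ AE_gs_pos]) measurable
  have cond_mean_pos: "AE \<omega> in P. 0 < cond_mean (gs m) (fst \<omega>)" for m
    using AE_cond_mean[OF measurable_gs integrable_gs AE_gs_pos, of m]
    by (intro AE_distrD[of fst P MX]) (auto elim: AE_mp)
  show ?thesis
    using gs_pos[of n] gs_pos[of "Suc n"] cond_mean_pos[of n] cond_mean_pos[of "Suc n"] AE_space
    by eventually_elim (auto simp: space_P h_pos)
qed

lemma AE_EM_joint_ln_ratio_ge:
  "AE \<omega> in EM_joint n. 2 - gs n (snd \<omega>) / gs (Suc n) (snd \<omega>)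
      - EM_density (gs (Suc n)) \<omega> / EM_density (gs n) \<omega>
    \<le> ln (cond_mean (gs (Suc n)) (fst \<omega>) / cond_mean (gs n) (fst \<omega>))"
proof -
  have "AE \<omega> in P. 2 - gs n (snd \<omega>) / gs (Suc n) (snd \<omega>)
      - EM_density (gs (Suc n)) \<omega> / EM_density (gs n) \<omega>
    \<le> ln (cond_mean (gs (Suc n)) (fst \<omega>) / cond_mean (gs n) (fst \<omega>))"
    using AE_EM_step_pos[of n]
  proof eventually_elim
    case (elim \<omega>)
    define a where "a = gs (Suc n) (snd \<omega>) / gs n (snd \<omega>)"
    define b where "b = cond_mean (gs (Suc n)) (fst \<omega>) / cond_mean (gs n) (fst \<omega>) / a"
    have "0 < a" "0 < b" "1 / a = gs n (snd \<omega>) / gs (Suc n) (snd \<omega>)"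
      "1 / b = EM_density (gs (Suc n)) \<omega> / EM_density (gs n) \<omega>"
      "a * b = cond_mean (gs (Suc n)) (fst \<omega>) / cond_mean (gs n) (fst \<omega>)"
      using elim by (simp_all add: a_def b_def EM_density_def field_simps)
    then show ?case
      using two_sub_inverses_le_ln_mult[of a b] by simp
  qed
  then show ?thesis
    unfolding EM_joint_def by (subst AE_density) (auto elim: AE_mp)
qed

text \<open>
  Under EM_joint n the three terms of the bound integrate to 2, 1 and 1: the middle one through the
  Y-marginal gs (Suc n), the last one being the density of EM_joint (Suc n) with respect to EM_joint n.
\<close>

lemma KL_Suc_le:
  assumes int_n: "integrable PX (\<lambda>x. h x * ln (h x / cond_mean (gs n) x))"
    and int_Suc: "integrable PX (\<lambda>x. h x * ln (h x / cond_mean (gs (Suc n)) x))"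
  shows "KL PX h (cond_mean (gs (Suc n))) \<le> KL PX h (cond_mean (gs n))"
proof -
  interpret Q: prob_space "EM_joint n"
    by (rule prob_space_EM_joint)
  note L = integral_EM_joint_fst[OF _ KL_diff_eq_integral(1)[OF assms], of n]
  note u = integral_EM_joint_gs_ratio[of n] and v = integral_EM_joint_density_ratio[of n]
  have "0 = (\<integral>\<omega>. 2 - gs n (snd \<omega>) / gs (Suc n) (snd \<omega>)
      - EM_density (gs (Suc n)) \<omega> / EM_density (gs n) \<omega> \<partial>EM_joint n)"
    using u v by (simp add: Bochner_Integration.integral_diff Q.prob_space)
  also have "\<dots> \<le> (\<integral>\<omega>. ln (cond_mean (gs (Suc n)) (fst \<omega>) / cond_mean (gs n) (fst \<omega>)) \<partial>EM_joint n)"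
    using AE_EM_joint_ln_ratio_ge u(1) v(1) L(1) by (intro integral_mono_AE) auto
  also have "\<dots> = KL PX h (cond_mean (gs n)) - KL PX h (cond_mean (gs (Suc n)))"
    using L(2) KL_diff_eq_integral(2)[OF assms] by simp
  finally show ?thesis
    by simp
qed

lemma KL_mono:
  assumes int: "\<And>n. integrable PX (\<lambda>x. h x * ln (h x / cond_mean (gs n) x))"
  shows "n \<le> m \<Longrightarrow> KL PX h (cond_mean (gs m)) \<le> KL PX h (cond_mean (gs n))"
proof (induction m rule: dec_induct)
  case (step m)
  then show ?case
    using KL_Suc_le[OF int int, of m] by linarith
qed simp

lemma KL_limit_le:
  assumes G: "prob_density PY G" and G_pos: "AE y in PY. 0 < G y"
    and lim: "AE x in PX. (\<lambda>n. cond_mean (gs n) x) \<longlonglongrightarrow> cond_mean G x"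
    and int: "\<And>n. integrable PX (\<lambda>x. h x * ln (h x / cond_mean (gs n) x))"
    and int_G: "integrable PX (\<lambda>x. h x * ln (h x / cond_mean G x))"
  shows "KL PX h (cond_mean G) \<le> KL PX h (cond_mean (gs n))"
proof -
  note G_meas[measurable] = prob_density_PYD(1)[OF G] and G_int = prob_density_PYD(2)[OF G]
  note gs = KL_cond_mean_eq_integral_nonneg[OF gs_density[THEN conjunct1] AE_gs_pos int]
  note limit = KL_cond_mean_eq_integral_nonneg[OF G G_pos int_G]
  have "(\<integral>x. h x * ln (h x / cond_mean G x) - h x + cond_mean G x \<partial>PX) \<le> KL PX h (cond_mean (gs n))"
  proof (rule integral_le_of_AE_tendsto_nonneg)
    show "AE x in PX. (\<lambda>m. h x * ln (h x / cond_mean (gs m) x) - h x + cond_mean (gs m) x)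
        \<longlonglongrightarrow> h x * ln (h x / cond_mean G x) - h x + cond_mean G x"
      using lim AE_cond_mean[OF G_meas G_int G_pos] AE_space
    proof eventually_elim
      case (elim x)
      then have "0 < h x"
        using h_pos by simp
      with elim show ?case
        by (auto intro!: tendsto_intros)
    qed
    show "\<forall>\<^sub>F m in sequentially. (\<integral>x. h x * ln (h x / cond_mean (gs m) x) - h x + cond_mean (gs m) x \<partial>PX)
        \<le> KL PX h (cond_mean (gs n))"
      using KL_mono[OF int] gs(2) by (auto simp: eventually_sequentially)
  qed (use gs(1,3) in auto)
  then show ?thesis
    using limit(2) by simp
qed

lemma KL_limit_le_of_real_cond_exp:
  assumes g: "prob_density PY g" and g_pos: "AE y in PY. 0 < g y"
    and lim: "AE x in PX. (\<lambda>n. cond_mean (gs n) x) \<longlonglongrightarrow> cond_mean g x"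
    and hn_measurable: "\<And>n. hn n \<in> borel_measurable MX"
    and hn: "\<And>n. AE \<omega> in P. real_cond_exp P (sigX P MX) (\<lambda>\<omega>. gs n (snd \<omega>)) \<omega> = hn n (fst \<omega>)"
    and KL_hn_finite: "\<And>n. integrable PX (\<lambda>x. h x * \<bar>ln (h x / hn n x)\<bar>)"
    and hh_measurable: "hh \<in> borel_measurable MX"
    and hh: "AE \<omega> in P. real_cond_exp P (sigX P MX) (\<lambda>\<omega>. g (snd \<omega>)) \<omega> = hh (fst \<omega>)"
    and KL_hh_finite: "integrable PX (\<lambda>x. h x * \<bar>ln (h x / hh x)\<bar>)"
  shows "KL_wd PX h hh \<and> (\<forall>n. KL PX h hh \<le> KL PX h (hn n))"
proof -
  note KL_hn = KL_cond_mean_of_real_cond_exp[OF gs_density[THEN conjunct1] AE_gs_pos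
      hn_measurable hn KL_hn_finite]
  note KL_hh = KL_cond_mean_of_real_cond_exp[OF g g_pos hh_measurable hh KL_hh_finite]
  show ?thesis
    using KL_hh(1) KL_limit_le[OF g g_pos lim KL_hn(3) KL_hh(3)] by (simp add: KL_hh(2) KL_hn(2))
qed

lemma AE_EM_recursion_limit:
  assumes g_lim: "AE y in PY. (\<lambda>n. gs n y) \<longlonglongrightarrow> g y"
    and lim2: "AE y in PY. (\<lambda>n. \<integral>x. EM_q KYX gs n x y * h x \<partial>KXY y) \<longlonglongrightarrow> (\<integral>x. q x y * h x \<partial>KXY y)"
  shows "AE y in PY. g y = (\<integral>x. q x y * h x \<partial>KXY y)"
  using g_lim lim2 AE_space
proof eventually_elim
  case (elim y)
  then have "(\<lambda>n. \<integral>x. EM_q KYX gs n x y * h x \<partial>KXY y) \<longlonglongrightarrow> g y"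
    using LIMSEQ_Suc[OF elim(1)] gs_Suc_integral by simp
  then show ?case
    using elim(2) by (rule LIMSEQ_unique)
qed

lemma AE_EM_q_limit:
  assumes g: "prob_density PY g" and g_pos: "AE y in PY. 0 < g y"
    and g_lim: "AE y in PY. (\<lambda>n. gs n y) \<longlonglongrightarrow> g y"
    and q_lim: "AE \<omega> in P. (\<lambda>n. EM_q KYX gs n (fst \<omega>) (snd \<omega>)) \<longlonglongrightarrow> q (fst \<omega>) (snd \<omega>)"
    and lim1: "AE x in PX. (\<lambda>n. cond_mean (gs n) x) \<longlonglongrightarrow> cond_mean g x"
  shows "AE y in PY. AE x in KXY y. q x y = g y / cond_mean g x"
proof -
  note g_meas[measurable] = prob_density_PYD(1)[OF g] and g_int = prob_density_PYD(2)[OF g]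
  have "AE \<omega> in P. (\<lambda>n. gs n (snd \<omega>)) \<longlonglongrightarrow> g (snd \<omega>)"
    by (rule AE_distrD[OF _ g_lim]) measurable
  moreover have "AE \<omega> in P. (\<lambda>n. cond_mean (gs n) (fst \<omega>)) \<longlonglongrightarrow> cond_mean g (fst \<omega>)"
    by (rule AE_distrD[OF _ lim1]) measurable
  moreover have "AE \<omega> in P. 0 < cond_mean g (fst \<omega>)"
    using AE_cond_mean[OF g_meas g_int g_pos] by (intro AE_distrD[of fst P MX]) (auto elim: AE_mp)
  ultimately have "AE \<omega> in P. q (fst \<omega>) (snd \<omega>) = g (snd \<omega>) / cond_mean g (fst \<omega>)"
    using q_lim
  proof eventually_elim
    case (elim \<omega>)
    then have "(\<lambda>n. EM_q KYX gs n (fst \<omega>) (snd \<omega>)) \<longlonglongrightarrow> g (snd \<omega>) / cond_mean g (fst \<omega>)"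
      unfolding EM_q_def cond_mean_def[symmetric] by (auto intro!: tendsto_intros)
    then show ?case
      using elim(4) by (rule LIMSEQ_unique[symmetric])
  qed
  then show ?thesis
    using AE_disintegration_KXY by force
qed

lemma EM_factor_limit_eq_1:
  assumes g: "prob_density PY g" and g_pos: "AE y in PY. 0 < g y"
    and g_lim: "AE y in PY. (\<lambda>n. gs n y) \<longlonglongrightarrow> g y"
    and q_lim: "AE \<omega> in P. (\<lambda>n. EM_q KYX gs n (fst \<omega>) (snd \<omega>)) \<longlonglongrightarrow> q (fst \<omega>) (snd \<omega>)"
    and lim1: "AE x in PX. (\<lambda>n. cond_mean (gs n) x) \<longlonglongrightarrow> cond_mean g x"
    and lim2: "AE y in PY. (\<lambda>n. \<integral>x. EM_q KYX gs n x y * h x \<partial>KXY y) \<longlonglongrightarrow> (\<integral>x. q x y * h x \<partial>KXY y)"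
  shows "AE y in PY. EM_factor g y = 1"
  using EM_factor_eq_1_of_fixed_point[OF g g_pos AE_EM_recursion_limit[OF g_lim lim2]
      AE_EM_q_limit[OF g g_pos g_lim q_lim lim1]] .

end

theorem proposition5:
  fixes MX :: "'a measure" and MY :: "'b measure" and P :: "('a \<times> 'b) measure"
    and KYX :: "'a \<Rightarrow> 'b measure" and KXY :: "'b \<Rightarrow> 'a measure"
    and h :: "'a \<Rightarrow> real" and gs :: "nat \<Rightarrow> 'b \<Rightarrow> real" and hn :: "nat \<Rightarrow> 'a \<Rightarrow> real"
    and g :: "'b \<Rightarrow> real" and q :: "'a \<Rightarrow> 'b \<Rightarrow> real"
  defines "PX \<equiv> distr P MX fst" and "PY \<equiv> distr P MY snd"
  assumes P: "prob_space P" "sets P = sets (MX \<Otimes>\<^sub>M MY)"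
    and KYX: "reg_cond_YX MX MY P KYX"
    and KXY: "reg_cond_XY MX MY P KXY"
    and h: "prob_density PX h" "\<forall>x\<in>space MX. 0 < h x"
    and g0: "prob_density PY (gs 0)" "\<forall>y\<in>space MY. 0 < gs 0 y"
    and rec: "\<forall>n. \<forall>y\<in>space MY.
               gs (Suc n) y = (\<integral>x. EM_q KYX gs n x y * h x \<partial>KXY y)"
    and hn: "\<forall>n. hn n \<in> borel_measurable MX \<and>
               (AE \<omega> in P. real_cond_exp P (sigX P MX) (\<lambda>\<omega>. gs n (snd \<omega>)) \<omega> = hn n (fst \<omega>))"
    and KL_fin: "\<forall>n. integrable PX (\<lambda>x. h x * \<bar>ln (h x / hn n x)\<bar>)"
    and g_lim: "AE y in PY. (\<lambda>n. gs n y) \<longlonglongrightarrow> g y \<and> 0 < g y"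
    and q_lim: "AE \<omega> in P. (\<lambda>n. EM_q KYX gs n (fst \<omega>) (snd \<omega>)) \<longlonglongrightarrow> q (fst \<omega>) (snd \<omega>)
                  \<and> 0 < q (fst \<omega>) (snd \<omega>)"
    and g_int: "(\<integral>y. g y \<partial>PY) = 1"
    and lim1: "AE x in PX. (\<lambda>n. \<integral>z. gs n z \<partial>KYX x) \<longlonglongrightarrow> (\<integral>z. g z \<partial>KYX x)"
    and lim2: "AE y in PY. (\<lambda>n. \<integral>x. EM_q KYX gs n x y * h x \<partial>KXY y)
                             \<longlonglongrightarrow> (\<integral>x. q x y * h x \<partial>KXY y)"
  shows
    "(prob_density PY g \<and>
     prob_space (density P (\<lambda>\<omega>. ennreal (g (snd \<omega>)))) \<and>
     label_shift MX MY P (density P (\<lambda>\<omega>. ennreal (g (snd \<omega>)))) \<and>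
     distr (density P (\<lambda>\<omega>. ennreal (g (snd \<omega>)))) MY snd = density PY (\<lambda>y. ennreal (g y)) \<and>
     (\<forall>hh. hh \<in> borel_measurable MX \<and>
            (AE \<omega> in P. real_cond_exp P (sigX P MX) (\<lambda>\<omega>. g (snd \<omega>)) \<omega> = hh (fst \<omega>)) \<and>
            integrable PX (\<lambda>x. h x * \<bar>ln (h x / hh x)\<bar>) \<longrightarrow>
          KL_wd PX h hh \<and> (\<forall>n. KL PX h hh \<le> KL PX h (hn n))))
     \<and> ((AE y in PY. 1 = (\<integral>x. h x / (\<integral>z. g z \<partial>KYX x) \<partial>KXY y)) \<and>
     (let f = (\<lambda>\<omega>. g (snd \<omega>) * h (fst \<omega>) / (\<integral>z. g z \<partial>KYX (fst \<omega>)));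
          Q = density P (\<lambda>\<omega>. ennreal (f \<omega>))
      in prob_density P f \<and> prob_space Q \<and> FJS MX MY P Q \<and>
         distr Q MX fst = density PX (\<lambda>x. ennreal (h x)) \<and>
         distr Q MY snd = density PY (\<lambda>y. ennreal (g y))))"
proof -
  have g0_pos: "AE y in distr P MY snd. 0 < gs 0 y"
    using g0(2) by (intro AE_I2) simp
  interpret EM: EM_iteration MX MY P KYX KXY h gs
    by (intro EM_iteration.intro EM_setting.intro cond_kernels.intro joint_distribution.intro
          EM_iteration_axioms.intro EM_setting_axioms.intro cond_kernels_axioms.intro)
       (fact P KYX KXY h[unfolded PX_def] g0(1)[unfolded PY_def] g0_pos rec)+
  have g_pos: "AE y in EM.PY. 0 < g y"
    using g_lim[unfolded PY_def] by (auto elim: AE_mp)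
  have g: "prob_density EM.PY g"
    using g_int[unfolded PY_def] g_pos by (auto intro: prob_densityI_integral elim: AE_mp)
  have lim: "AE x in EM.PX. (\<lambda>n. EM.cond_mean (gs n) x) \<longlonglongrightarrow> EM.cond_mean g x"
    using lim1[unfolded PX_def] by (simp add: EM.cond_mean_def)
  have fixed_point: "AE y in EM.PY. EM.EM_factor g y = 1"
    using g_lim[unfolded PY_def] q_lim lim2[unfolded PY_def]
    by (intro EM.EM_factor_limit_eq_1[OF g g_pos _ _ lim, where q = q]) (auto elim: AE_mp)
  have f_eq: "(\<lambda>\<omega>. g (snd \<omega>) * h (fst \<omega>) / (\<integral>z. g z \<partial>KYX (fst \<omega>))) = EM.EM_density g"
    by (simp add: fun_eq_iff EM.EM_density_def EM.cond_mean_def)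
  show ?thesis
    unfolding Let_def f_eq PX_def PY_def
    using g EM.prob_space_density_snd[OF g] EM.label_shift_density_snd[OF g g_pos]
      EM.distr_snd_density_snd[OF EM.prob_density_PYD(1)[OF g]]
      EM.KL_limit_le_of_real_cond_exp[OF g g_pos lim] hn KL_fin[unfolded PX_def]
      EM.EM_fixed_point_FJS[OF g g_pos fixed_point] fixed_point
    by (auto simp: EM.EM_factor_def EM.cond_mean_def elim: AE_mp)
qed

end
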